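(* On $E_7:\ v^2=u(1-11u+32u^2)$ let $\Phi_7=\dfrac{128(1-4u)(-v-3u+4uv+20u^2)^7}{u^3(1-8u)(1-4v-20u+64u^2)^7}$ and $F_3=1-4v-4u$, $\widetilde F_3=1+4v-4u$, $F_4=1-2v-6u$, $\widetilde F_4=1+2v-6u$, $G_3=1+2v-10u+16u^2$, $G_4=1-4v-20u+64u^2$, $\widehat G_4=v-5u-8uv+24u^2$. Then in a neighborhood of $(u,v)=(0,0)$ on $E_7$ (where $\Phi_7$ vanishes), with branches of the radical factors chosen so that each right-hand side is holomorphic at $(0,0)$ and takes the value $1$ there: $${}_3F_2\!\left(-\tfrac1{14},\tfrac1{14},\tfrac5{14};\tfrac17,\tfrac57;\Phi_7\right)=\frac{F_3^{1/14}F_4^{1/7}\widetilde F_4^{3/7}}{\sqrt{G_4}},$$ $${}_3F_2\!\left(\tfrac3{14},\tfrac5{14},\tfrac9{14};\tfrac37,\tfrac97;\Phi_7\right)=\frac{(1-4u)^{4/7}F_3^{1/14}\widetilde F_4^{4/7}G_4^{3/2}}{\widetilde F_3^{4/7}G_3^2},$$ $${}_3F_2\!\left(\tfrac{11}{14},\tfrac{13}{14},\tfrac{17}{14};\tfrac{11}7,\tfrac{13}7;\Phi_7\right)=\frac{(1-8u)\widetilde F_3^{5/14}\widehat G_4^{11/2}}{u^{16/7}(v-u)^{1/14}(v+u)^{6/7}G_3^6}.$$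
   Context: ${}_3F_2(\alpha_1,\alpha_2,\alpha_3;\beta_1,\beta_2;z)=\sum_{n\ge0}\frac{(\alpha_1)_n(\alpha_2)_n(\alpha_3)_n}{(\beta_1)_n(\beta_2)_n n!}z^n$. A local parameter of $E_7$ at $(0,0)$ is $\sqrt u$ (equivalently $v$). *)

theory Defs
  imports "HOL-Analysis.Analysis"
begin

definition hyp3F2 :: "complex \<Rightarrow> complex \<Rightarrow> complex \<Rightarrow> complex \<Rightarrow> complex \<Rightarrow> complex \<Rightarrow> complex" where
  "hyp3F2 a1 a2 a3 b1 b2 z =
     (\<Sum>n. pochhammer a1 n * pochhammer a2 n * pochhammer a3 n
            / (pochhammer b1 n * pochhammer b2 n * fact n) * z ^ n)"

definition Phi7 :: "complex \<Rightarrow> complex \<Rightarrow> complex" where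
  "Phi7 u v = 128 * (1 - 4*u) * (20*u^2 + 4*u* v - 3*u - v) ^ 7
             / (u^3 * (1 - 8*u) * (1 - 4* v - 20*u + 64*u^2) ^ 7)"

definition F3 :: "complex \<Rightarrow> complex \<Rightarrow> complex" where "F3 u v = 1 - 4* v - 4*u"
definition F3t :: "complex \<Rightarrow> complex \<Rightarrow> complex" where "F3t u v = 1 + 4* v - 4*u"
definition F4 :: "complex \<Rightarrow> complex \<Rightarrow> complex" where "F4 u v = 1 - 2* v - 6*u"
definition F4t :: "complex \<Rightarrow> complex \<Rightarrow> complex" where "F4t u v = 1 + 2* v - 6*u"
definition G3 :: "complex \<Rightarrow> complex \<Rightarrow> complex" where "G3 u v = 1 + 2* v - 10*u + 16*u^2"
definition G4 :: "complex \<Rightarrow> complex \<Rightarrow> complex" where "G4 u v = 1 - 4* v - 20*u + 64*u^2"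
definition G4h :: "complex \<Rightarrow> complex \<Rightarrow> complex" where "G4h u v = v - 5*u - 8*u* v + 24*u^2"

end

theory Submission
  imports Defs "HOL-Complex_Analysis.Complex_Analysis"
begin

text \<open>Along the branch \<open>v \<mapsto> (U v, v)\<close> of \<open>E\<^sub>7\<close> the function \<open>\<Phi> = \<Phi>\<^sub>7(U v, v)\<close> equals
  \<open>-128 v + O(v\<^sup>2)\<close>, so it is a local coordinate at the origin. Each right-hand side \<open>h\<close> is a
  branch of a product \<open>\<Prod>\<^sub>i f\<^sub>i^(n\<^sub>i/14)\<close> of elements \<open>f\<^sub>i\<close> of the coordinate ring
  \<open>\<int>[u] \<oplus> \<int>[u] v\<close>, so its logarithmic derivative lies in the function field, and so does
  \<open>\<theta>\<^sup>j h / h\<close> for the Euler operator \<open>\<theta> = \<Phi> d/d\<Phi>\<close>. Explicit polynomial identities, checked by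
  evaluation, give \<open>\<theta>\<^sup>j h = h A\<^sub>j / (7\<^sup>j Q\<^sup>2\<^sup>j\<^sup>-\<^sup>1)\<close> for \<open>j \<le> 3\<close> and show that \<open>h\<close> satisfies
  the hypergeometric equation \<open>\<theta>(\<theta>+b\<^sub>1-1)(\<theta>+b\<^sub>2-1) h = \<Phi> (\<theta>+a\<^sub>1)(\<theta>+a\<^sub>2)(\<theta>+a\<^sub>3) h\<close>.
  Composed with the local inverse of \<open>\<Phi>\<close>, \<open>h\<close> becomes a solution holomorphic at \<open>0\<close> with
  value \<open>1\<close> there, and the recursion for its Taylor coefficients forces it to be the \<open>\<^sub>3F\<^sub>2\<close> series.\<close>


section \<open>Holomorphic branches of products of powers\<close>

definition prod_root :: "nat \<Rightarrow> (int \<times> ('a \<Rightarrow> complex)) list \<Rightarrow> 'a \<Rightarrow> complex" where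
  "prod_root N fl x = exp ((\<Sum>(n, f)\<leftarrow>fl. of_int n * Ln (f x)) / of_nat N)"

lemma prod_root_eq_1: "(\<forall>(n, f)\<in>set fl. f x = 1) \<Longrightarrow> prod_root N fl x = 1"
proof -
  assume "\<forall>(n, f)\<in>set fl. f x = 1"
  then have "(\<Sum>(n, f)\<leftarrow>fl. of_int n * Ln (f x)) = 0"
    by (induction fl) auto
  then show ?thesis
    by (simp add: prod_root_def)
qed

lemma prod_root_power:
  assumes "N > 0" and "\<forall>(n, f)\<in>set fl. f x \<noteq> 0"
  shows "prod_root N fl x ^ N = (\<Prod>(n, f)\<leftarrow>fl. f x powi n)"
proof -
  have "prod_root N fl x ^ N = exp (\<Sum>(n, f)\<leftarrow>fl. of_int n * Ln (f x))"
    using assms(1) by (simp add: prod_root_def flip: exp_of_nat_mult)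
  also have "\<dots> = (\<Prod>(n, f)\<leftarrow>fl. f x powi n)"
    using assms(2)
  proof (induction fl)
    case (Cons nf fl)
    obtain n f where nf: "nf = (n, f)"
      by fastforce
    have "exp (of_int n * Ln (f x)) = f x powi n"
      using Cons.prems complex_powr_of_int[of "f x" n] by (simp add: nf powr_def)
    then show ?case
      using Cons by (simp add: nf exp_add)
  qed simp
  finally show ?thesis .
qed

lemma holomorphic_on_prod_root:
  assumes "\<forall>(n, f)\<in>set fl. f holomorphic_on S \<and> (\<forall>x\<in>S. f x \<notin> \<real>\<^sub>\<le>\<^sub>0)"
  shows "prod_root N fl holomorphic_on S"
proof -
  have "(\<lambda>x. \<Sum>(n, f)\<leftarrow>fl. of_int n * Ln (f x)) holomorphic_on S"
    using assms by (induction fl) (auto intro!: holomorphic_intros)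
  then show ?thesis
    unfolding prod_root_def divide_inverse by (intro holomorphic_intros)
qed

lemma has_field_derivative_prod_root:
  assumes "\<forall>(n, f)\<in>set fl. f holomorphic_on S \<and> (\<forall>x\<in>S. f x \<notin> \<real>\<^sub>\<le>\<^sub>0)"
    and "open S" "x \<in> S"
  shows "(prod_root N fl has_field_derivative
           prod_root N fl x * ((\<Sum>(n, f)\<leftarrow>fl. of_int n * (deriv f x / f x)) / of_nat N)) (at x)"
proof -
  have "((\<lambda>x. \<Sum>(n, f)\<leftarrow>fl. of_int n * Ln (f x)) has_field_derivative
          (\<Sum>(n, f)\<leftarrow>fl. of_int n * (deriv f x / f x))) (at x)"
    using assms(1)
  proof (induction fl)
    case (Cons nf fl)
    obtain n f where nf: "nf = (n, f)"
      by fastforce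
    have f: "f holomorphic_on S" "f x \<notin> \<real>\<^sub>\<le>\<^sub>0"
      using Cons.prems assms(3) by (auto simp: nf)
    have "(f has_field_derivative deriv f x) (at x)"
      using f(1) assms(2,3) by (intro holomorphic_derivI)
    then have "((\<lambda>x. of_int n * Ln (f x)) has_field_derivative of_int n * (deriv f x / f x)) (at x)"
      using f(2) by (auto intro!: derivative_eq_intros simp: divide_inverse ac_simps)
    moreover have "((\<lambda>x. \<Sum>(n, f)\<leftarrow>fl. of_int n * Ln (f x)) has_field_derivative
        (\<Sum>(n, f)\<leftarrow>fl. of_int n * (deriv f x / f x))) (at x)"
      using Cons by (simp add: nf)
    ultimately show ?case
      by (simp add: nf DERIV_add)
  qed simp
  then show ?thesis
    unfolding prod_root_def by (rule DERIV_chain2[OF DERIV_exp DERIV_cdivide])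
qed

lemma ball_1_1_notin_nonpos_Reals: "z \<in> ball (1::complex) 1 \<Longrightarrow> z \<notin> \<real>\<^sub>\<le>\<^sub>0"
  using abs_Re_le_cmod[of "z - 1"] by (auto simp: dist_norm norm_minus_commute complex_nonpos_Reals_iff)

lemma pos_Re_notin_nonpos_Ints: "Re z > 0 \<Longrightarrow> z \<notin> \<int>\<^sub>\<le>\<^sub>0"
  by (auto elim!: nonpos_Ints_cases)

lemma isCont_eventually_in_open:
  "isCont f x \<Longrightarrow> open A \<Longrightarrow> f x \<in> A \<Longrightarrow> eventually (\<lambda>y. f y \<in> A) (nhds x)"
  by (metis isCont_def tendsto_at_iff_tendsto_nhds topological_tendstoD)

lemma eventually_nhds_imp_ball:
  assumes "eventually P (nhds x)" "e > 0"
  obtains \<rho> where "0 < \<rho>" "\<rho> \<le> e" "\<forall>y\<in>ball x \<rho>. P y"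
proof -
  obtain d where "d > 0" "\<forall>y. dist y x < d \<longrightarrow> P y"
    using assms(1) unfolding eventually_nhds_metric by blast
  then show thesis
    using assms(2) by (intro that[of "min d e"]) (auto simp: dist_commute)
qed

section \<open>The hypergeometric differential equation\<close>

lemma hyp3F2_coeff_eqI:
  fixes c :: "nat \<Rightarrow> 'a::field_char_0"
  assumes "c 0 = 1" and b: "b1 \<notin> \<int>\<^sub>\<le>\<^sub>0" "b2 \<notin> \<int>\<^sub>\<le>\<^sub>0"
    and rec: "\<And>m. c (Suc m) * ((of_nat m + 1) * (of_nat m + b1) * (of_nat m + b2))
                   = c m * ((of_nat m + a1) * (of_nat m + a2) * (of_nat m + a3))"
  shows "c n = pochhammer a1 n * pochhammer a2 n * pochhammer a3 n
               / (pochhammer b1 n * pochhammer b2 n * fact n)"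
proof (induction n)
  case 0
  then show ?case
    using assms(1) by simp
next
  case (Suc m)
  have nz: "of_nat m + b1 \<noteq> 0" "of_nat m + b2 \<noteq> 0" "pochhammer b1 m \<noteq> 0" "pochhammer b2 m \<noteq> 0"
    using b plus_of_nat_eq_0_imp[of b1 m] plus_of_nat_eq_0_imp[of b2 m]
    by (auto simp: add.commute pochhammer_eq_0_iff)
  have "(of_nat m + 1 :: 'a) \<noteq> 0"
    by (metis of_nat_Suc of_nat_eq_0_iff add.commute nat.distinct(1))
  with nz have "c (Suc m) = c m * ((of_nat m + a1) * (of_nat m + a2) * (of_nat m + a3))
      / ((of_nat m + 1) * (of_nat m + b1) * (of_nat m + b2))"
    using rec[of m] by (simp add: eq_divide_eq)
  with nz \<open>of_nat m + 1 \<noteq> 0\<close> show ?case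
    by (simp add: Suc.IH pochhammer_Suc field_simps)
qed

lemma fps_nth_X_mult_deriv [simp]:
  "fps_nth (fps_X * fps_deriv F) n = of_nat n * (fps_nth F n :: 'a::comm_ring_1)"
  by (cases n) simp_all

lemma has_fps_expansion_theta:
  assumes "g has_fps_expansion G" and "eventually (\<lambda>z. z * deriv g z = h z) (nhds 0)"
  shows "h has_fps_expansion fps_X * fps_deriv G"
proof -
  have "(\<lambda>z. z * deriv g z) has_fps_expansion fps_X * fps_deriv G"
    by (intro fps_expansion_intros assms(1))
  then show ?thesis
    using has_fps_expansion_cong[OF assms(2) refl] by blast
qed

text \<open>The hypergeometric equation \<open>\<theta>(\<theta>+b1-1)(\<theta>+b2-1) g = z(\<theta>+a1)(\<theta>+a2)(\<theta>+a3) g\<close>,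
  \<open>\<theta> = z d/dz\<close>, written for \<open>g0 = g\<close> and \<open>gj = \<theta>\<^sup>j g\<close>.\<close>

lemma hyp3F2_unique_solution:
  fixes g0 g1 g2 g3 :: "complex \<Rightarrow> complex"
  assumes "\<delta> > 0" and hol: "g0 holomorphic_on ball 0 \<delta>" "g1 holomorphic_on ball 0 \<delta>"
      "g2 holomorphic_on ball 0 \<delta>" "g3 holomorphic_on ball 0 \<delta>"
    and "g0 0 = 1"
    and theta: "\<And>z. z \<in> ball 0 \<delta> \<Longrightarrow> z * deriv g0 z = g1 z"
      "\<And>z. z \<in> ball 0 \<delta> \<Longrightarrow> z * deriv g1 z = g2 z"
      "\<And>z. z \<in> ball 0 \<delta> \<Longrightarrow> z * deriv g2 z = g3 z"
    and ode: "\<And>z. z \<in> ball 0 \<delta> \<Longrightarrow> g3 z + (b1 + b2 - 2) * g2 z + (b1 - 1) * (b2 - 1) * g1 z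
       = z * (g3 z + (a1 + a2 + a3) * g2 z + (a1 * a2 + a1 * a3 + a2 * a3) * g1 z + a1 * a2 * a3 * g0 z)"
    and b: "b1 \<notin> \<int>\<^sub>\<le>\<^sub>0" "b2 \<notin> \<int>\<^sub>\<le>\<^sub>0"
    and z: "z \<in> ball 0 \<delta>"
  shows "hyp3F2 a1 a2 a3 b1 b2 z = g0 z"
proof -
  define A where "A = fps_expansion g0 0"
  define T :: "complex fps \<Rightarrow> complex fps" where "T F = fps_X * fps_deriv F" for F
  have T_nth [simp]: "fps_nth (T F) n = of_nat n * fps_nth F n" for F n
    by (simp add: T_def)
  have near: "eventually (\<lambda>z. z \<in> ball 0 \<delta>) (nhds 0)"
    by (rule eventually_nhds_ball[OF \<open>\<delta> > 0\<close>])
  have A0: "g0 has_fps_expansion A"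
    unfolding A_def using hol(1) \<open>\<delta> > 0\<close> by (intro has_fps_expansion_fps_expansion) auto
  have theta_near: "eventually (\<lambda>z. z * deriv g0 z = g1 z \<and> z * deriv g1 z = g2 z \<and> z * deriv g2 z = g3 z) (nhds 0)"
    using near by eventually_elim (simp add: theta)
  have A1: "g1 has_fps_expansion T A"
    unfolding T_def using theta_near by (intro has_fps_expansion_theta[OF A0]) (auto elim: eventually_mono)
  have A2: "g2 has_fps_expansion T (T A)"
    unfolding T_def using theta_near
    by (intro has_fps_expansion_theta[OF A1[unfolded T_def]]) (auto elim: eventually_mono)
  have A3: "g3 has_fps_expansion T (T (T A))"
    unfolding T_def using theta_near
    by (intro has_fps_expansion_theta[OF A2[unfolded T_def]]) (auto elim: eventually_mono)
  let ?L = "\<lambda>z. g3 z + (b1 + b2 - 2) * g2 z + (b1 - 1) * (b2 - 1) * g1 z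
       - z * (g3 z + (a1 + a2 + a3) * g2 z + (a1 * a2 + a1 * a3 + a2 * a3) * g1 z + a1 * a2 * a3 * g0 z)"
  let ?B = "T (T (T A)) + fps_const (b1 + b2 - 2) * T (T A) + fps_const ((b1 - 1) * (b2 - 1)) * T A
       - fps_X * (T (T (T A)) + fps_const (a1 + a2 + a3) * T (T A)
                  + fps_const (a1 * a2 + a1 * a3 + a2 * a3) * T A + fps_const (a1 * a2 * a3) * A)"
  have "?L has_fps_expansion ?B"
    by (intro fps_expansion_intros A0 A1 A2 A3)
  moreover have "?L has_fps_expansion 0"
    unfolding has_fps_expansion_0_iff using near by eventually_elim (simp add: ode)
  ultimately have B: "?B = 0"
    by (rule fps_expansion_unique_complex)
  have rec: "fps_nth A (Suc m) * ((of_nat m + 1) * (of_nat m + b1) * (of_nat m + b2))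
      = fps_nth A m * ((of_nat m + a1) * (of_nat m + a2) * (of_nat m + a3))" for m
  proof -
    have "fps_nth A (Suc m) * ((of_nat m + 1) * (of_nat m + b1) * (of_nat m + b2))
        - fps_nth A m * ((of_nat m + a1) * (of_nat m + a2) * (of_nat m + a3)) = fps_nth ?B (Suc m)"
      by simp (simp add: algebra_simps)
    then show ?thesis
      by (simp add: B)
  qed
  have A_0: "fps_nth A 0 = 1"
    using fps_nth_fps_expansion[OF A0, of 0] \<open>g0 0 = 1\<close> by simp
  have "(\<lambda>n. fps_nth A n * z ^ n) sums g0 z"
    using holomorphic_power_series[OF hol(1) z] by (simp add: fps_nth_fps_expansion[OF A0])
  then show ?thesis
    unfolding hyp3F2_def hyp3F2_coeff_eqI[of "fps_nth A", OF A_0 b rec, symmetric] by (simp add: sums_iff)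
qed

lemma holomorphic_local_inverse_0:
  fixes f :: "complex \<Rightarrow> complex"
  assumes f: "f holomorphic_on S" "open S" "0 \<in> S" "f 0 = 0" "deriv f 0 \<noteq> 0"
  obtains s \<delta> \<psi> where "s > 0" "ball 0 s \<subseteq> S" "\<delta> > 0" "\<psi> holomorphic_on ball 0 \<delta>"
    "\<And>z. z \<in> ball 0 \<delta> \<Longrightarrow> \<psi> z \<in> ball 0 s \<and> f (\<psi> z) = z \<and> deriv f (\<psi> z) * deriv \<psi> z = 1"
    "\<And>v. v \<in> ball 0 s \<Longrightarrow> \<psi> (f v) = v"
proof -
  obtain s where s: "s > 0" "ball 0 s \<subseteq> S" "inj_on f (ball 0 s)"
    using has_complex_derivative_locally_injective[OF f(1,3,2,5)] by blast
  have fs: "f holomorphic_on ball 0 s"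
    using f(1) s(2) by (rule holomorphic_on_subset)
  obtain \<psi> where \<psi>: "\<psi> holomorphic_on f ` ball 0 s"
    "\<And>v. v \<in> ball 0 s \<Longrightarrow> deriv f v * deriv \<psi> (f v) = 1" "\<And>v. v \<in> ball 0 s \<Longrightarrow> \<psi> (f v) = v"
    using holomorphic_has_inverse[OF fs open_ball s(3)] by blast
  have "open (f ` ball 0 s)"
    by (rule open_mapping_thm3[OF fs open_ball s(3)])
  moreover have "0 \<in> f ` ball 0 s"
    using s(1) f(4) by (metis centre_in_ball imageI)
  ultimately obtain \<delta> where \<delta>: "\<delta> > 0" "ball 0 \<delta> \<subseteq> f ` ball 0 s"
    using open_contains_ball by blast
  show thesis
  proof (rule that[OF s(1,2) \<delta>(1) holomorphic_on_subset[OF \<psi>(1) \<delta>(2)]])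
    fix z :: complex
    assume "z \<in> ball 0 \<delta>"
    then obtain v where "v \<in> ball 0 s" "z = f v"
      using \<delta>(2) by blast
    then show "\<psi> z \<in> ball 0 s \<and> f (\<psi> z) = z \<and> deriv f (\<psi> z) * deriv \<psi> z = 1"
      using \<psi>(2,3) by auto
  qed (use \<psi>(3) in auto)
qed

lemma theta_comp_inverse:
  fixes f g h \<psi> :: "complex \<Rightarrow> complex"
  assumes g: "g holomorphic_on S" "open S" and \<psi>: "\<psi> holomorphic_on T" "open T" "z \<in> T"
    and inv: "\<psi> z \<in> S" "f (\<psi> z) = z" "deriv f (\<psi> z) * deriv \<psi> z = 1"
    and theta: "f (\<psi> z) * deriv g (\<psi> z) = deriv f (\<psi> z) * h (\<psi> z)"
  shows "z * deriv (\<lambda>z. g (\<psi> z)) z = h (\<psi> z)"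
proof -
  have "((\<lambda>z. g (\<psi> z)) has_field_derivative deriv g (\<psi> z) * deriv \<psi> z) (at z)"
    using g \<psi> inv(1) by (intro DERIV_chain2[where f = g] holomorphic_derivI) auto
  then have "z * deriv (\<lambda>z. g (\<psi> z)) z = f (\<psi> z) * deriv g (\<psi> z) * deriv \<psi> z"
    using inv(2) by (simp add: DERIV_imp_deriv)
  also have "\<dots> = h (\<psi> z) * (deriv f (\<psi> z) * deriv \<psi> z)"
    using theta by (simp add: ac_simps)
  finally show ?thesis
    using inv(3) by simp
qed

lemma hyp3F2_comp_eqI:
  fixes f g0 g1 g2 g3 :: "complex \<Rightarrow> complex"
  assumes S: "open S" "0 \<in> S" and f: "f holomorphic_on S" "f 0 = 0" "deriv f 0 \<noteq> 0"
    and hol: "g0 holomorphic_on S" "g1 holomorphic_on S" "g2 holomorphic_on S" "g3 holomorphic_on S"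
    and "g0 0 = 1"
    and theta: "\<And>v. v \<in> S \<Longrightarrow> f v * deriv g0 v = deriv f v * g1 v"
      "\<And>v. v \<in> S \<Longrightarrow> f v * deriv g1 v = deriv f v * g2 v"
      "\<And>v. v \<in> S \<Longrightarrow> f v * deriv g2 v = deriv f v * g3 v"
    and ode: "\<And>v. v \<in> S \<Longrightarrow> g3 v + (b1 + b2 - 2) * g2 v + (b1 - 1) * (b2 - 1) * g1 v
       = f v * (g3 v + (a1 + a2 + a3) * g2 v + (a1 * a2 + a1 * a3 + a2 * a3) * g1 v + a1 * a2 * a3 * g0 v)"
    and b: "b1 \<notin> \<int>\<^sub>\<le>\<^sub>0" "b2 \<notin> \<int>\<^sub>\<le>\<^sub>0"
  shows "eventually (\<lambda>v. hyp3F2 a1 a2 a3 b1 b2 (f v) = g0 v) (nhds 0)"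
proof -
  obtain s \<delta> \<psi> where s: "s > 0" "ball 0 s \<subseteq> S" and \<delta>: "\<delta> > 0"
    and \<psi>: "\<psi> holomorphic_on ball 0 \<delta>"
    and inv: "\<And>z. z \<in> ball 0 \<delta> \<Longrightarrow> \<psi> z \<in> ball 0 s \<and> f (\<psi> z) = z \<and> deriv f (\<psi> z) * deriv \<psi> z = 1"
    and inv': "\<And>v. v \<in> ball 0 s \<Longrightarrow> \<psi> (f v) = v"
    using holomorphic_local_inverse_0[OF f(1) S f(2,3)] by blast
  have \<psi>S: "\<psi> z \<in> S" if "z \<in> ball 0 \<delta>" for z
    using inv[OF that] s(2) by blast
  have \<psi>_0: "\<psi> 0 = 0"
    using inv'[of 0] s(1) f(2) by simp
  have comp_hol: "(\<lambda>z. g (\<psi> z)) holomorphic_on ball 0 \<delta>" if "g holomorphic_on S" for g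
    using holomorphic_on_compose_gen[OF \<psi> that] \<psi>S by (auto simp: o_def image_subset_iff)
  have comp_theta: "z * deriv (\<lambda>z. g (\<psi> z)) z = h (\<psi> z)"
    if "g holomorphic_on S" "\<And>v. v \<in> S \<Longrightarrow> f v * deriv g v = deriv f v * h v" "z \<in> ball 0 \<delta>" for g h z
    by (rule theta_comp_inverse[where f = f and h = h, OF that(1) S(1) \<psi> open_ball that(3) \<psi>S[OF that(3)]])
      (use inv[OF that(3)] that(2)[OF \<psi>S[OF that(3)]] in auto)
  have hyp: "hyp3F2 a1 a2 a3 b1 b2 z = g0 (\<psi> z)" if "z \<in> ball 0 \<delta>" for z
  proof (rule hyp3F2_unique_solution[OF \<delta> comp_hol[OF hol(1)] comp_hol[OF hol(2)] comp_hol[OF hol(3)]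
        comp_hol[OF hol(4)] _ comp_theta[OF hol(1) theta(1)] comp_theta[OF hol(2) theta(2)]
        comp_theta[OF hol(3) theta(3)] _ b that])
    show "g0 (\<psi> 0) = 1"
      using \<psi>_0 \<open>g0 0 = 1\<close> by simp
    fix z :: complex
    assume "z \<in> ball 0 \<delta>"
    then show "g3 (\<psi> z) + (b1 + b2 - 2) * g2 (\<psi> z) + (b1 - 1) * (b2 - 1) * g1 (\<psi> z)
       = z * (g3 (\<psi> z) + (a1 + a2 + a3) * g2 (\<psi> z) + (a1 * a2 + a1 * a3 + a2 * a3) * g1 (\<psi> z)
              + a1 * a2 * a3 * g0 (\<psi> z))"
      using ode[OF \<psi>S] inv by metis
  qed
  have "isCont f 0"
    using holomorphic_on_imp_continuous_on[OF f(1)] S by (simp add: continuous_on_eq_continuous_at)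
  then have "eventually (\<lambda>v. f v \<in> ball 0 \<delta>) (nhds 0)"
    using \<delta> f(2) by (intro isCont_eventually_in_open) auto
  moreover have "eventually (\<lambda>v. v \<in> ball 0 s) (nhds 0)"
    by (rule eventually_nhds_ball[OF s(1)])
  ultimately show ?thesis
    by eventually_elim (use hyp inv' in auto)
qed

section \<open>Integer polynomials and the coordinate ring of \<open>v\<^sup>2 = c(u)\<close>\<close>

fun cl_eval :: "int list \<Rightarrow> 'a::comm_ring_1 \<Rightarrow> 'a" where
  "cl_eval [] x = 0"
| "cl_eval (a # p) x = of_int a + x * cl_eval p x"

fun cl_add :: "int list \<Rightarrow> int list \<Rightarrow> int list" where
  "cl_add [] q = q"
| "cl_add p [] = p"
| "cl_add (a # p) (b # q) = (a + b) # cl_add p q"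

definition cl_scale :: "int \<Rightarrow> int list \<Rightarrow> int list" where
  "cl_scale c p = map ((*) c) p"

fun cl_mult :: "int list \<Rightarrow> int list \<Rightarrow> int list" where
  "cl_mult [] q = []"
| "cl_mult (a # p) q = cl_add (cl_scale a q) (0 # cl_mult p q)"

fun cl_deriv :: "int list \<Rightarrow> int list" where
  "cl_deriv [] = []"
| "cl_deriv (a # p) = cl_add p (0 # cl_deriv p)"

lemma cl_eval_add [simp]: "cl_eval (cl_add p q) x = cl_eval p x + cl_eval q x"
  by (induction p q rule: cl_add.induct) (auto simp: algebra_simps)

lemma cl_eval_scale [simp]: "cl_eval (cl_scale c p) x = of_int c * cl_eval p x"
  by (induction p) (auto simp: cl_scale_def algebra_simps)

lemma cl_eval_mult [simp]: "cl_eval (cl_mult p q) x = cl_eval p x * cl_eval q x"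
  by (induction p) (auto simp: algebra_simps)

lemma cl_eval_eq_0: "list_all ((=) 0) p \<Longrightarrow> cl_eval p x = 0"
  by (induction p) auto

lemma has_field_derivative_cl_eval:
  "(cl_eval p has_field_derivative cl_eval (cl_deriv p) x) (at x)"
proof (induction p)
  case Nil
  then show ?case by simp
next
  case (Cons a p)
  have "((\<lambda>x. of_int a + x * cl_eval p x) has_field_derivative 0 + (1 * cl_eval p x + cl_eval (cl_deriv p) x * x)) (at x)"
    by (intro DERIV_add DERIV_const DERIV_mult DERIV_ident Cons)
  then show ?case
    by (simp add: algebra_simps)
qed

lemma holomorphic_on_cl_eval [holomorphic_intros]:
  "f holomorphic_on S \<Longrightarrow> (\<lambda>x. cl_eval p (f x)) holomorphic_on S"
  by (induction p) (auto intro!: holomorphic_intros)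

lemma isCont_cl_eval [continuous_intros]:
  fixes f :: "complex \<Rightarrow> complex"
  shows "isCont f x \<Longrightarrow> isCont (\<lambda>x. cl_eval p (f x)) x"
  by (induction p) (auto intro!: continuous_intros)

text \<open>Coefficient lists start with the constant term. A pair \<open>(A, B)\<close> stands for \<open>A(u) + B(u) v\<close>,
  and \<open>hc_mult c\<close>, \<open>hc_power c\<close> multiply modulo \<open>v\<^sup>2 = c(u)\<close>.\<close>

type_synonym hc = "int list \<times> int list"

definition hc_eval :: "hc \<Rightarrow> 'a::comm_ring_1 \<Rightarrow> 'a \<Rightarrow> 'a" where
  "hc_eval P u v = cl_eval (fst P) u + cl_eval (snd P) u * v"

definition hc_const :: "int \<Rightarrow> hc" where
  "hc_const a = ([a], [])"

definition hc_add :: "hc \<Rightarrow> hc \<Rightarrow> hc" where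
  "hc_add P Q = (cl_add (fst P) (fst Q), cl_add (snd P) (snd Q))"

definition hc_scale :: "int \<Rightarrow> hc \<Rightarrow> hc" where
  "hc_scale a P = (cl_scale a (fst P), cl_scale a (snd P))"

definition hc_diff :: "hc \<Rightarrow> hc \<Rightarrow> hc" where
  "hc_diff P Q = hc_add P (hc_scale (-1) Q)"

definition hc_mult :: "int list \<Rightarrow> hc \<Rightarrow> hc \<Rightarrow> hc" where
  "hc_mult c P Q =
     (cl_add (cl_mult (fst P) (fst Q)) (cl_mult (cl_mult (snd P) (snd Q)) c),
      cl_add (cl_mult (fst P) (snd Q)) (cl_mult (snd P) (fst Q)))"

fun hc_power :: "int list \<Rightarrow> hc \<Rightarrow> nat \<Rightarrow> hc" where
  "hc_power c P 0 = hc_const 1"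
| "hc_power c P (Suc n) = hc_mult c P (hc_power c P n)"

definition hc_der :: "int list \<Rightarrow> hc \<Rightarrow> hc" where
  "hc_der c P =
     (cl_add (cl_scale 2 (cl_mult (cl_deriv (snd P)) c)) (cl_mult (snd P) (cl_deriv c)),
      cl_scale 2 (cl_deriv (fst P)))"

definition hc_is_zero :: "hc \<Rightarrow> bool" where
  "hc_is_zero P \<longleftrightarrow> list_all ((=) 0) (fst P) \<and> list_all ((=) 0) (snd P)"

lemma hc_eval_const [simp]: "hc_eval (hc_const a) u v = of_int a"
  by (simp add: hc_eval_def hc_const_def)

lemma hc_eval_add [simp]: "hc_eval (hc_add P Q) u v = hc_eval P u v + hc_eval Q u v"
  by (simp add: hc_eval_def hc_add_def algebra_simps)

lemma hc_eval_scale [simp]: "hc_eval (hc_scale a P) u v = of_int a * hc_eval P u v"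
  by (simp add: hc_eval_def hc_scale_def algebra_simps)

lemma hc_eval_diff [simp]: "hc_eval (hc_diff P Q) u v = hc_eval P u v - hc_eval Q u v"
  by (simp add: hc_diff_def)

lemma hc_eval_mult [simp]:
  assumes "v\<^sup>2 = cl_eval c u"
  shows "hc_eval (hc_mult c P Q) u v = hc_eval P u v * hc_eval Q u v"
  by (simp add: hc_eval_def hc_mult_def flip: assms) (simp add: algebra_simps power2_eq_square)

lemma hc_eval_power [simp]:
  "v\<^sup>2 = cl_eval c u \<Longrightarrow> hc_eval (hc_power c P n) u v = hc_eval P u v ^ n"
  by (induction n) simp_all

lemma of_int_hc_eval: "of_int (hc_eval P u v) = (hc_eval P (of_int u) (of_int v) :: 'a::comm_ring_1)"
proof -
  have "of_int (cl_eval p u) = (cl_eval p (of_int u) :: 'a)" for p :: "int list"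
    by (induction p) simp_all
  then show ?thesis
    by (simp add: hc_eval_def)
qed

lemma hc_eval_eq_if_is_zero:
  "hc_is_zero (hc_diff P Q) \<Longrightarrow> hc_eval P u v = hc_eval Q u v"
  using hc_eval_diff[of P Q u v]
  by (simp add: hc_is_zero_def hc_eval_def cl_eval_eq_0 del: hc_eval_diff)

lemma param_curve_deriv:
  fixes U :: "'a::real_normed_field \<Rightarrow> 'a"
  assumes "open S" "v \<in> S" and U: "(U has_field_derivative U') (at v)"
    and curve: "\<forall>x\<in>S. x\<^sup>2 = cl_eval c (U x)"
  shows "U' * cl_eval (cl_deriv c) (U v) = 2 * v"
proof -
  have "((\<lambda>x. cl_eval c (U x)) has_field_derivative cl_eval (cl_deriv c) (U v) * U') (at v)"
    by (rule DERIV_chain2[OF has_field_derivative_cl_eval U])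
  then have "((\<lambda>x. x\<^sup>2) has_field_derivative cl_eval (cl_deriv c) (U v) * U') (at v)"
    by (rule has_field_derivative_transform_within_open) (use assms curve in auto)
  moreover have "((\<lambda>x. x\<^sup>2) has_field_derivative 2 * v) (at v)"
    by (auto intro!: derivative_eq_intros)
  ultimately show ?thesis
    by (metis DERIV_unique mult.commute)
qed

text \<open>On a curve \<open>v\<^sup>2 = c(u)\<close> parametrised by \<open>v\<close>, the operator \<open>hc_der c\<close> is \<open>c'(u) d/dv\<close>.\<close>

lemma has_field_derivative_hc_eval:
  fixes U :: "'a::real_normed_field \<Rightarrow> 'a"
  assumes U: "(U has_field_derivative U') (at v)"
    and U': "U' * cl_eval (cl_deriv c) (U v) = 2 * v"
    and curve: "v\<^sup>2 = cl_eval c (U v)"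
    and nz: "cl_eval (cl_deriv c) (U v) \<noteq> 0"
  shows "((\<lambda>x. hc_eval P (U x) x) has_field_derivative
           hc_eval (hc_der c P) (U v) v / cl_eval (cl_deriv c) (U v)) (at v)"
proof -
  let ?A = "fst P" and ?B = "snd P" and ?u = "U v"
  have "((\<lambda>x. cl_eval ?A (U x) + cl_eval ?B (U x) * x) has_field_derivative
      cl_eval (cl_deriv ?A) ?u * U' + (cl_eval (cl_deriv ?B) ?u * U' * v + 1 * cl_eval ?B ?u)) (at v)"
    by (intro DERIV_add DERIV_mult DERIV_chain2[OF has_field_derivative_cl_eval U] DERIV_ident)
  moreover have "cl_eval (cl_deriv ?A) ?u * U' + (cl_eval (cl_deriv ?B) ?u * U' * v + 1 * cl_eval ?B ?u)
      = hc_eval (hc_der c P) ?u v / cl_eval (cl_deriv c) ?u"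
  proof -
    have "U' = 2 * v / cl_eval (cl_deriv c) ?u"
      using U' nz by (simp add: field_simps)
    then show ?thesis
      using nz by (simp add: hc_der_def hc_eval_def flip: curve) (simp add: field_simps power2_eq_square)
  qed
  ultimately show ?thesis
    by (simp add: hc_eval_def)
qed

fun hc_logder_sum :: "int list \<Rightarrow> (int \<times> hc) list \<Rightarrow> hc \<times> hc" where
  "hc_logder_sum c [] = (hc_const 0, hc_const 1)"
| "hc_logder_sum c ((n, P) # l) = (case hc_logder_sum c l of (a, b) \<Rightarrow>
     (hc_add (hc_mult c (hc_scale n (hc_der c P)) b) (hc_mult c a P), hc_mult c P b))"

lemma hc_logder_sum_eq:
  fixes u v :: "'a::field"
  assumes curve: "v\<^sup>2 = cl_eval c u" and nz: "\<forall>(n, P)\<in>set l. hc_eval P u v \<noteq> 0"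
  shows "hc_eval (snd (hc_logder_sum c l)) u v \<noteq> 0 \<and>
    hc_eval (fst (hc_logder_sum c l)) u v / hc_eval (snd (hc_logder_sum c l)) u v
      = (\<Sum>(n, P)\<leftarrow>l. of_int n * (hc_eval (hc_der c P) u v / hc_eval P u v))"
  using nz
proof (induction l)
  case (Cons nP l)
  obtain n P where nP: "nP = (n, P)"
    by (cases nP)
  obtain a b where ab: "hc_logder_sum c l = (a, b)"
    by (cases "hc_logder_sum c l")
  with Cons show ?case
    by (auto simp: nP hc_eval_mult[OF curve] field_simps)
qed simp

section \<open>Polynomial certificates on \<open>E\<^sub>7\<close>\<close>

definition E7_cubic :: "int list" where
  "E7_cubic = [0, 1, -11, 32]"

abbreviation e7_mult :: "hc \<Rightarrow> hc \<Rightarrow> hc" where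
  "e7_mult \<equiv> hc_mult E7_cubic"

abbreviation e7_power :: "hc \<Rightarrow> nat \<Rightarrow> hc" where
  "e7_power \<equiv> hc_power E7_cubic"

abbreviation e7_der :: "hc \<Rightarrow> hc" where
  "e7_der \<equiv> hc_der E7_cubic"

definition "e7_u = ([0, 1], [])"
definition "e7_1m4u = ([1, -4], [])"
definition "e7_1m8u = ([1, -8], [])"
definition "e7_vmu = ([0, -1], [1])"
definition "e7_vpu = ([0, 1], [1])"
definition "e7_F3 = ([1, -4], [-4])"
definition "e7_F3t = ([1, -4], [4])"
definition "e7_F4 = ([1, -6], [-2])"
definition "e7_F4t = ([1, -6], [2])"
definition "e7_G3 = ([1, -10, 16], [2])"
definition "e7_G4 = ([1, -20, 64], [-4])"
definition "e7_G4h = ([0, -5, 24], [1, -8])"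
definition "e7_K = ([0, -3, 20], [-1, 4])"

definition "Phi_num = hc_scale 128 (e7_mult e7_1m4u (e7_power e7_K 7))"

definition "Phi_den = e7_mult (e7_power e7_u 3) (e7_mult e7_1m8u (e7_power e7_G4 7))"

definition "Phi_logder_den = e7_mult e7_1m4u (e7_mult e7_K (e7_mult e7_1m8u e7_G4))"

text \<open>\<open>\<Phi>\<^sub>7 = Phi_num / Phi_den\<close>, and by \<open>Phi_logder_cert\<close> its logarithmic derivative along \<open>E\<^sub>7\<close>
  is \<open>Phi_logder_num / (c'(u) Phi_logder_den)\<close>, \<open>c\<close> the cubic.\<close>

definition Phi_logder_num :: hc where
  "Phi_logder_num = ([-1,-96,2656,-25728,116736,-229376,49152,262144], [-48,800,-2688,-22528,188416,-376832])"

lemma Phi_logder_cert: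
  "hc_is_zero (hc_diff
     (e7_mult (hc_diff (e7_mult (e7_der Phi_num) Phi_den) (e7_mult Phi_num (e7_der Phi_den))) Phi_logder_den)
     (e7_mult (e7_mult Phi_num Phi_den) Phi_logder_num))"
  by code_simp

definition logder_num :: "(int \<times> hc) list \<Rightarrow> hc" where
  "logder_num fl = fst (hc_logder_sum E7_cubic fl)"

definition logder_den :: "(int \<times> hc) list \<Rightarrow> hc" where
  "logder_den fl = snd (hc_logder_sum E7_cubic fl)"

text \<open>If \<open>h\<close> has logarithmic derivative \<open>l / (14 c'(u) dl)\<close>, then \<open>theta_cert l dl A k m B k' e\<close>
  says \<open>\<theta>(h A / (k Q\<^sup>m)) = h B / (k' Q\<^sup>m\<^sup>+\<^sup>2\<^sup>-\<^sup>e)\<close>, where \<open>Q = Phi_logder_num\<close>.\<close>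

definition theta_cert :: "hc \<Rightarrow> hc \<Rightarrow> hc \<Rightarrow> int \<Rightarrow> nat \<Rightarrow> hc \<Rightarrow> int \<Rightarrow> nat \<Rightarrow> bool" where
  "theta_cert l dl A k m B k' e \<longleftrightarrow> hc_is_zero (hc_diff
     (hc_scale k' (e7_mult Phi_logder_den (hc_add (e7_mult (e7_mult l A) Phi_logder_num)
        (hc_scale 14 (e7_mult dl (hc_diff (e7_mult (e7_der A) Phi_logder_num)
           (hc_scale (int m) (e7_mult A (e7_der Phi_logder_num)))))))))
     (hc_scale (14 * k) (e7_mult dl (e7_mult B (e7_power Phi_logder_num e)))))"

lemma theta_cert_algebra:
  fixes C dl Q Dl k k' h l A A' Q' B :: complex
  assumes nz: "C \<noteq> 0" "dl \<noteq> 0" "Q \<noteq> 0" "Dl \<noteq> 0" "k \<noteq> 0" "k' \<noteq> 0" and mj: "m + 2 = m' + j"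
    and cert: "k' * (Dl * (l * A * Q + 14 * (dl * (A' * Q - of_nat m * (A * Q')))))
      = 14 * k * (dl * (B * Q ^ j))"
  shows "h * (l / (14 * C * dl)) * (A / (k * Q ^ m)) + (A' * Q - of_nat m * A * Q') / (C * k * Q ^ (m + 1)) * h
    = Q / (C * Dl) * (h * (B / (k' * Q ^ m')))"
proof -
  have num: "l * A * Q + 14 * (dl * (A' * Q - of_nat m * (A * Q'))) = 14 * k * (dl * (B * Q ^ j)) / (k' * Dl)"
    using cert nz by (simp add: field_simps)
  have pow: "Q ^ (m + 1) * Q = Q ^ m' * Q ^ j"
  proof -
    have "Q ^ (m + 1) * Q = Q ^ (m + 2)"
      by (simp add: power_add power2_eq_square)
    also have "\<dots> = Q ^ m' * Q ^ j"
      by (simp only: mj power_add)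
    finally show ?thesis .
  qed
  have "h * (l / (14 * C * dl)) * (A / (k * Q ^ m)) + (A' * Q - of_nat m * A * Q') / (C * k * Q ^ (m + 1)) * h
      = h * (l * A * Q + 14 * (dl * (A' * Q - of_nat m * (A * Q')))) / (14 * C * dl * k * Q ^ (m + 1))"
    using nz by (simp add: field_simps)
  also have "\<dots> = h * B * Q ^ j * Q / (k' * Dl * C * (Q ^ (m + 1) * Q))"
    unfolding num using nz by (simp add: field_simps)
  also have "\<dots> = Q / (C * Dl) * (h * (B / (k' * Q ^ m')))"
    unfolding pow using nz by (simp add: field_simps)
  finally show ?thesis .
qed

text \<open>The hypergeometric equation for \<open>h\<close>, given \<open>\<theta>\<^sup>j h = h A\<^sub>j / (7\<^sup>j Q\<^sup>2\<^sup>j\<^sup>-\<^sup>1)\<close>, multiplied by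
  \<open>2744 \<cdot> 343 Q\<^sup>5 Phi_den\<close>; the integer coefficients \<open>\<alpha>\<^sub>i, \<beta>\<^sub>i\<close> are those of \<open>ode_cert_algebra\<close>.\<close>

definition ode_cert :: "hc \<Rightarrow> hc \<Rightarrow> hc \<Rightarrow> int \<Rightarrow> int \<Rightarrow> int \<Rightarrow> int \<Rightarrow> int \<Rightarrow> bool" where
  "ode_cert A1 A2 A3 \<alpha>1 \<alpha>2 \<beta>0 \<beta>1 \<beta>2 \<longleftrightarrow> hc_is_zero (hc_diff
     (e7_mult Phi_den (hc_add (hc_scale 2744 A3) (hc_add (hc_scale \<alpha>2 (e7_mult A2 (e7_power Phi_logder_num 2)))
        (hc_scale \<alpha>1 (e7_mult A1 (e7_power Phi_logder_num 4))))))
     (e7_mult Phi_num (hc_add (hc_scale 2744 A3) (hc_add (hc_scale \<beta>2 (e7_mult A2 (e7_power Phi_logder_num 2)))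
        (hc_add (hc_scale \<beta>1 (e7_mult A1 (e7_power Phi_logder_num 4))) (hc_scale \<beta>0 (e7_power Phi_logder_num 5)))))))"

lemma ode_cert_algebra:
  fixes N D Q A1 A2 A3 \<alpha>1 \<alpha>2 \<beta>0 \<beta>1 \<beta>2 c1 c2 s1 s2 s3 h :: complex
  assumes nz: "D \<noteq> 0" "Q \<noteq> 0"
    and cert: "D * (2744 * A3 + \<alpha>2 * (A2 * Q ^ 2) + \<alpha>1 * (A1 * Q ^ 4))
      = N * (2744 * A3 + \<beta>2 * (A2 * Q ^ 2) + \<beta>1 * (A1 * Q ^ 4) + \<beta>0 * Q ^ 5)"
    and coeffs: "\<alpha>2 = 2744 * 7 * c1" "\<alpha>1 = 2744 * 49 * c2"
      "\<beta>2 = 2744 * 7 * s1" "\<beta>1 = 2744 * 49 * s2" "\<beta>0 = 2744 * 343 * s3"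
  shows "h * (A3 / (343 * Q ^ 5)) + c1 * (h * (A2 / (49 * Q ^ 3))) + c2 * (h * (A1 / (7 * Q)))
    = N / D * (h * (A3 / (343 * Q ^ 5)) + s1 * (h * (A2 / (49 * Q ^ 3))) + s2 * (h * (A1 / (7 * Q))) + s3 * h)"
proof -
  have "h * (A3 / (343 * Q ^ 5)) + c1 * (h * (A2 / (49 * Q ^ 3))) + c2 * (h * (A1 / (7 * Q)))
      = h * (D * (2744 * A3 + \<alpha>2 * (A2 * Q ^ 2) + \<alpha>1 * (A1 * Q ^ 4))) / (D * 2744 * 343 * Q ^ 5)"
    using nz unfolding coeffs by (simp add: field_simps eval_nat_numeral)
  also have "\<dots> = N / D * (h * (A3 / (343 * Q ^ 5)) + s1 * (h * (A2 / (49 * Q ^ 3))) + s2 * (h * (A1 / (7 * Q))) + s3 * h)"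
    unfolding cert using nz unfolding coeffs by (simp add: field_simps eval_nat_numeral)
  finally show ?thesis .
qed

definition theta_certs :: "hc \<Rightarrow> hc \<Rightarrow> hc \<Rightarrow> hc \<Rightarrow> hc \<Rightarrow> bool" where
  "theta_certs l dl A1 A2 A3 \<longleftrightarrow>
     theta_cert l dl (hc_const 1) 1 0 A1 7 1 \<and> theta_cert l dl A1 7 1 A2 49 0 \<and> theta_cert l dl A2 49 3 A3 343 0
     \<and> (\<forall>A\<in>{A1, A2, A3}. hc_eval A (0::int) 0 = 0)"

text \<open>The right-hand side \<open>h\<^sub>I\<close> is \<open>\<Prod> P\<^sup>n\<^sup>/\<^sup>1\<^sup>4\<close> over the pairs \<open>(n, P)\<close> in \<open>hI_factors\<close>.\<close>

definition "h1_factors = [(1, e7_F3), (2, e7_F4), (6, e7_F4t), (-7, e7_G4)]"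

definition "h2_factors = [(8, e7_1m4u), (1, e7_F3), (8, e7_F4t), (21, e7_G4), (-8, e7_F3t), (-28, e7_G3)]"

definition "h3_factors =
  [(14, e7_1m8u), (5, e7_F3t), (77, e7_G4h), (-32, e7_u), (-1, e7_vmu), (-12, e7_vpu), (-84, e7_G3)]"

text \<open>\<open>hI_thetaJ\<close> is the numerator \<open>A\<^sub>J\<close> of \<open>\<theta>\<^sup>J h\<^sub>I = h\<^sub>I A\<^sub>J / (7\<^sup>J Q\<^sup>2\<^sup>J\<^sup>-\<^sup>1)\<close>.\<close>

definition h1_theta1 :: hc where
  "h1_theta1 = ([0,-104,2384,-21760,98048,-212992,188416,-131072], [-16,144,128,-3840,12288,-24576])"

definition h1_theta2 :: hc where
  "h1_theta2 = ([0,-1600,-97888,9227520,-244240896,2340708352,18938757120,-802438119424,10076320694272,-58123637227520,-54367847710720,3995402084810752,-37793723098071040,210696051345063936,-795225882187792384,2086523390461476864,-3735885424485203968,4291871071256182784,-2750072095114264576,666180901129945088,17732923532771328,4503599627370496], [-112,-27488,1651200,-46999040,1205551104,-32160808960,705186103296,-11287484170240,131003788034048,-1121439453282304,7181984887472128,-34619626302210048,125158429718216704,-334048339941130240,635610114190999552,-799995314520981504,543446816167821312,-14144117579710464,-231724274577047552,97671816918597632])"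

definition h1_theta3 :: hc where
  "h1_theta3 = ([0,51856,-11110400,538092288,-25025222656,2876837920768,-243424686260224,12975555874914304,-482887632290316288,13489029010016960512,-296025680303441838080,5260965701190674284544,-77358338544198964215808,956210968742716948611072,-10056252689501024080101376,90803590881383795031801856,-708608138788593816022548480,4799333311262580144003350528,-28267108564708787221539323904,144746331905916589540739383296,-642895099875319835743777456128,2465908721599053605651647299584,-8116192035160412027165167583232,22730684269402544889645919895552,-53595661138007314376544640565248,104990100917772456258768251912192,-168117943887616554974348469862400,215875079763584620067581935484928,-217964256993221912466940537864192,171545830347583678084310152249344,-109341741732974594674159247163392,64283537702403770329098459545600,-37881081712358501771799913562112,17938169457578746844982758342656,-4370943836365868658900661698560,-154742504910672534362390528], [-784,215424,-70167296,1795715072,286875320320,-27310765195264,1222063265284096,-34615299569352704,655911896244813824,-7590780657941348352,15046289571450978304,1517990124955644198912,-39840564253946655277056,634589811451613761503232,-7609339542835450473349120,73470096279358518157377536,-589278419599374410756128768,3992736195163834657913438208,-23062048785007185291884101632,113996307468427476785933844480,-482157083522639790547379683328,1738727565799689801988346740736,-5309693931501865620716889571328,13593615350131977136750425276416,-28776571500193044200176882810880,49442459815018214639375719858176,-67209576419193386969823252054016,69695041349984261418957821444096,-52156083193345595279963269890048,25648861277975159896932024844288,-6845708756425898439199567118336,489016689778943026143168561152,124171188784257791792420749312,-59488821731596672428941508608])"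

definition h2_theta1 :: hc where
  "h2_theta1 = ([0,184,-4080,34432,-133632,161792,434176,-1179648], [80,-1392,6528,17408,-247808,581632])"

definition h2_theta2 :: hc where
  "h2_theta2 = ([0,-4384,-2044896,150433280,-4804919296,91251986432,-1146651836416,9958397050880,-61402408288256,298756004118528,-1704279517691904,14387148807471104,-116116064076562432,692729249332723712,-2902939567545909248,8299082121134211072,-14929672458268049408,12254032902307708928,8796735136998621184,-29652051790328233984,20162334056760999936,364791569817010176], [560,-399584,19184640,-359705600,1887653888,47415459840,-1165204914176,12563085262848,-71977771466752,94536982331392,1940544909475840,-17201921962016768,66769563731099648,-74446111250579456,-520268114621890560,2952408073148301312,-7277414576574955520,9289659393870135296,-4823707044634689536,-348184546191081472])"

definition h2_theta3 :: hc where
  "h2_theta3 = ([0,-486416,64206464,15827235584,-2061468681216,113714876506112,-3865921344094208,91404395490050048,-1580748353845592064,20180944109566951424,-181015868530537529344,843398372887401332736,5644182428364975374336,-190265478987524987682816,2800161023289025366065152,-31387455316108010061824000,296875365382636885153677312,-2426330099973100284426584064,17076648392121625180071002112,-102252218084987203518260576256,513486364917558996059365048320,-2126754415943066356366926938112,7096381242994728104830101880832,-18298853804561030128503997071360,33078112355801658924975465168896,-27774436824376711145073439408128,-50614507065903048563900607889408,235369202408171534821491837239296,-418623453321357538502486020587520,327127254364417808527864937578496,164009981156367234179553854226432,-662053748640830032835998958747648,625588104667801939545887275483136,-201257429724064992457903984082944,-20983809021378964437044979302400,-112807286079880277550182694912], [3920,-10539264,3179750144,-207736916992,5008520355840,4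7936707117056,-7401392454369280,281156121537282048,-6885312165354405888,127237325275332083712,-1903116052624350117888,24073998536385239187456,-265436387425781012234240,2595767598434912210780160,-22606609809706965559934976,174123711333978738727583744,-1170758365250039867712208896,6771010839604619667641991168,-33201553496750822476440666112,136124307628596313028133126144,-460318754184968240346643300352,1269797716478259283991055040512,-2870907515278816078554042728448,5682959597210857913932421529600,-11912119480418720443063414554624,30446573367621932443136931397632,-79502627618201378936289249722368,169194306710700275080373192359936,-261621530898926834760808063303680,270241027572777065846614467280896,-160668008498543175276732593733632,31645293939141886792934262571008,10580632412294278312170874732544,-263806956653025919987682902016])"

definition h3_theta1 :: hc where
  "h3_theta1 = ([0,816,-20032,191616,-889088,1886208,-909312,-1441792], [272,-4352,11264,158464,-1169408,2252800])"

definition h3_theta2 :: hc where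
  "h3_theta2 = ([0,-64464,-26980800,1918390784,-55911318016,870023278592,-6591149785088,-12370954420224,899756980699136,-11001704940044288,75679578688847872,-300570368626655232,333627741846896640,3815746434007826432,-27604447770005471232,98502307222474719232,-212755074463656050688,262232047679971524608,-112689694398669127680,-114172513372073885696,122051772026391101440,544935554911830016], [1904,-4139840,157523712,-480829952,-87251660800,2476125044736,-34772918337536,284444136046592,-1146337282228224,-2238276471619584,62438635613454336,-416167792518103040,1454606189009567744,-1899726303456657408,-6759122696665038848,41216149392543711232,-98905013767148404736,121996884405932523520,-62312437762995781632,-2572962762112106496])"

definition h3_theta3 :: hc where
  "h3_theta3 = ([0,-2713200,1641833536,606453246720,-67195109459968,2946579125805056,-65737872620077056,489593306619576320,15709705841529061376,-629370572890276102144,12046259098874621722624,-150598263722949275025408,1257326568486424148967424,-5721330224901962019635200,-13022715967709609180790784,493076998568742078866522112,-4730749954765853370206912512,26611820945833718088508375040,-77108704106870596497037066240,-139031967056655643658376183808,2972707412761939002893585612800,-17997671232805011159107164438528,64312364321968400570671316336640,-119527758218321132734536094842880,-121116888501188662970587214249984,1750794669313475651302878510841856,-6818076877652822525885758308352000,16467273806155357481701106698420224,-26640618022066332685402458701168640,27082041042154441461552615943831552,-11758249647646673096593806356119552,-8045971013160491433893884539699200,13637291572343091075983346669453312,-5530311695629520607830504338620416,-157398186108542939480084476592128,-205962274036105143236341792768], [13328,-79303232,76654291200,-3533336258560,-69393206173696,10519976514863104,-415038327240654848,9239493006462025728,-125051111972309827584,795078158780368683008,6271490082594694889472,-2353357422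76160960069632,3321340737491056598188032,-30140509470889371968208896,184886218963439415560503296,-663356860708878322583470080,-138635017036564988814163968,18627388114450128860881092608,-120364391244670848464393863168,323465392267852538404082286592,715948555969176110897349787648,-11594132355661262009029560893440,61031224191550463672055188422656,-196679355076438240761671351009280,388799481193664545564734955454464,-263126450021127555728694988242944,-1071787551610293574821588542423040,4299153372951942375331946460872704,-8156795675219141262141183039111168,9239804702289006157493452371132416,-5874576204292668770729263426961408,1403898027530903417835460069687296,238114330789363551100732029534208,1697592978715976121189207638016])"

lemma h1_theta_certs:
  "theta_certs (logder_num h1_factors) (logder_den h1_factors) h1_theta1 h1_theta2 h1_theta3"
  by code_simp

lemma h1_ode_cert: "ode_cert h1_theta1 h1_theta2 h1_theta3 32928 (-21952) (-1715) (-686) 6860"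
  by code_simp

lemma h2_theta_certs:
  "theta_certs (logder_num h2_factors) (logder_den h2_factors) h2_theta1 h2_theta2 h2_theta3"
  by code_simp

lemma h2_ode_cert: "ode_cert h2_theta1 h2_theta2 h2_theta3 (-21952) (-5488) 46305 59682 23324"
  by code_simp

lemma h3_theta_certs:
  "theta_certs (logder_num h3_factors) (logder_den h3_factors) h3_theta1 h3_theta2 h3_theta3"
  by code_simp

lemma h3_ode_cert: "ode_cert h3_theta1 h3_theta2 h3_theta3 65856 27440 833833 377986 56252"
  by code_simp

section \<open>Branches of \<open>E\<^sub>7\<close> through the origin\<close>

definition factor_funs :: "(int \<times> nat \<times> hc \<times> 'a) list \<Rightarrow> (int \<times> 'a) list" where
  "factor_funs fs = map (\<lambda>(n, k, P, f). (n, f)) fs"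

definition factor_polys :: "(int \<times> nat \<times> hc \<times> 'a) list \<Rightarrow> (int \<times> hc) list" where
  "factor_polys fs = map (\<lambda>(n, k, P, f). (n, P)) fs"

lemma factor_funs_simps [simp]:
  "factor_funs [] = []" "factor_funs ((n, k, P, f) # fs) = (n, f) # factor_funs fs"
  by (simp_all add: factor_funs_def)

lemma factor_polys_simps [simp]:
  "factor_polys [] = []" "factor_polys ((n, k, P, f) # fs) = (n, P) # factor_polys fs"
  by (simp_all add: factor_polys_def)

locale E7_branch =
  fixes U :: "complex \<Rightarrow> complex" and r :: real
  assumes r_pos: "r > 0" and holomorphic_U: "U holomorphic_on ball 0 r" and U_0: "U 0 = 0"
    and on_E7: "\<forall>v\<in>ball 0 r. v\<^sup>2 = U v * (1 - 11 * U v + 32 * (U v)\<^sup>2)"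
begin

definition hc_fun :: "hc \<Rightarrow> complex \<Rightarrow> complex" where
  "hc_fun P v = hc_eval P (U v) v"

definition dcubic :: "complex \<Rightarrow> complex" where
  "dcubic v = cl_eval (cl_deriv E7_cubic) (U v)"

definition Phi :: "complex \<Rightarrow> complex" where
  "Phi v = Phi7 (U v) v"

text \<open>Near the origin \<open>u = v\<^sup>2 W\<close>; the quotients below are \<open>K/v\<close> (with \<open>K\<close> the numerator factor of
  \<open>\<Phi>\<^sub>7\<close>), \<open>\<Phi>\<^sub>7/v\<close>, \<open>(v - u)/v\<close>, \<open>(v + u)/v\<close> and \<open>\<widehat>G\<^sub>4/v\<close>, written so that they are visibly
  holomorphic at \<open>v = 0\<close>.\<close>

definition W :: "complex \<Rightarrow> complex" where
  "W v = 1 / (1 - 11 * U v + 32 * U v ^ 2)"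

definition "K_quot v = 20 * v ^ 3 * W v ^ 2 + 4 * v\<^sup>2 * W v - 3 * v * W v - 1"

definition "Phi_quot v = 128 * (1 - 4 * U v) * K_quot v ^ 7 / (W v ^ 3 * (1 - 8 * U v) * G4 (U v) v ^ 7)"

definition "vmu_quot v = 1 - v * W v"

definition "vpu_quot v = 1 + v * W v"

definition "G4h_quot v = 1 - 5 * v * W v - 8 * v\<^sup>2 * W v + 24 * v ^ 3 * W v ^ 2"

definition unit_factors :: "(complex \<Rightarrow> complex) list" where
  "unit_factors = [hc_fun e7_F3, hc_fun e7_F3t, hc_fun e7_F4, hc_fun e7_F4t, hc_fun e7_G3, hc_fun e7_G4,
     hc_fun e7_1m4u, hc_fun e7_1m8u, W, vmu_quot, vpu_quot, G4h_quot]"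

definition good_radius :: "real \<Rightarrow> bool" where
  "good_radius e \<longleftrightarrow> 0 < e \<and> e \<le> r \<and> (\<forall>v\<in>ball 0 e.
     1 - 11 * U v + 32 * U v ^ 2 \<noteq> 0 \<and> dcubic v \<noteq> 0 \<and> hc_fun Phi_logder_num v \<noteq> 0 \<and>
     K_quot v \<noteq> 0 \<and> Phi_quot v \<noteq> 0 \<and> (\<forall>f\<in>set unit_factors. f v \<in> ball 1 1))"

text \<open>A factor \<open>(n, k, P, f)\<close> stands for \<open>f\<^sup>n\<^sup>/\<^sup>1\<^sup>4\<close>, where \<open>f = P(u, v)/v\<^sup>k\<close> is a unit near the origin;
  the total \<open>v\<close>-degree \<open>\<Sum> n k\<close> vanishes, so the product of the \<open>f\<^sup>n\<close> is the product of the \<open>P\<^sup>n\<close>.\<close>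

definition valid_factors :: "real \<Rightarrow> (int \<times> nat \<times> hc \<times> (complex \<Rightarrow> complex)) list \<Rightarrow> bool" where
  "valid_factors \<rho> fs \<longleftrightarrow> (\<Sum>(n, k, _)\<leftarrow>fs. n * int k) = 0 \<and>
     (\<forall>(n, k, P, f)\<in>set fs. f 0 = 1 \<and> f holomorphic_on ball 0 \<rho> \<and>
        (\<forall>v\<in>ball 0 \<rho>. f v \<notin> \<real>\<^sub>\<le>\<^sub>0 \<and> v ^ k * f v = hc_fun P v))"

definition polynomial_factors :: "(int \<times> hc) list \<Rightarrow> (int \<times> nat \<times> hc \<times> (complex \<Rightarrow> complex)) list" where
  "polynomial_factors l = map (\<lambda>(n, P). (n, 0, P, hc_fun P)) l"

lemma factor_polys_polynomial_factors [simp]: "factor_polys (polynomial_factors l) = l"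
  by (induction l) (auto simp: polynomial_factors_def)

lemma factor_funs_polynomial_factors [simp]:
  "factor_funs (polynomial_factors l) = map (\<lambda>(n, P). (n, hc_fun P)) l"
  by (induction l) (auto simp: polynomial_factors_def)

definition "rhs1 = prod_root 14 (factor_funs (polynomial_factors h1_factors))"

definition "rhs2 = prod_root 14 (factor_funs (polynomial_factors h2_factors))"

definition "h3_factor_list =
  [(14, 0, e7_1m8u, hc_fun e7_1m8u), (5, 0, e7_F3t, hc_fun e7_F3t), (77, 1, e7_G4h, G4h_quot), (-32, 2, e7_u, W),
   (-1, 1, e7_vmu, vmu_quot), (-12, 1, e7_vpu, vpu_quot), (-84, 0, e7_G3, hc_fun e7_G3)]"

definition "rhs3 = prod_root 14 (factor_funs h3_factor_list)"

definition theta_term :: "(complex \<Rightarrow> complex) \<Rightarrow> hc \<Rightarrow> int \<Rightarrow> nat \<Rightarrow> complex \<Rightarrow> complex" where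
  "theta_term H A k m v = H v * (hc_fun A v / (of_int k * hc_fun Phi_logder_num v ^ m))"

lemma on_E7_cubic: "v \<in> ball 0 r \<Longrightarrow> v\<^sup>2 = cl_eval E7_cubic (U v)"
  using on_E7 by (auto simp: E7_cubic_def algebra_simps power2_eq_square)

lemma hc_fun_mult [simp]: "v \<in> ball 0 r \<Longrightarrow> hc_fun (e7_mult P Q) v = hc_fun P v * hc_fun Q v"
  by (simp add: hc_fun_def on_E7_cubic)

lemma hc_fun_const [simp]: "hc_fun (hc_const a) v = of_int a"
  and hc_fun_add [simp]: "hc_fun (hc_add P Q) v = hc_fun P v + hc_fun Q v"
  and hc_fun_scale [simp]: "hc_fun (hc_scale a P) v = of_int a * hc_fun P v"
  and hc_fun_diff [simp]: "hc_fun (hc_diff P Q) v = hc_fun P v - hc_fun Q v"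
  by (simp_all add: hc_fun_def)

lemma hc_fun_power [simp]: "v \<in> ball 0 r \<Longrightarrow> hc_fun (e7_power P n) v = hc_fun P v ^ n"
  by (simp add: hc_fun_def on_E7_cubic)

lemma hc_fun_basic [simp]:
  "hc_fun e7_u v = U v" "hc_fun e7_1m4u v = 1 - 4 * U v" "hc_fun e7_1m8u v = 1 - 8 * U v"
  "hc_fun e7_vmu v = v - U v" "hc_fun e7_vpu v = v + U v"
  "hc_fun e7_F3 v = F3 (U v) v" "hc_fun e7_F3t v = F3t (U v) v" "hc_fun e7_F4 v = F4 (U v) v"
  "hc_fun e7_F4t v = F4t (U v) v" "hc_fun e7_G3 v = G3 (U v) v" "hc_fun e7_G4 v = G4 (U v) v"
  "hc_fun e7_G4h v = G4h (U v) v"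
  by (simp_all add: hc_fun_def hc_eval_def e7_u_def e7_1m4u_def e7_1m8u_def e7_vmu_def e7_vpu_def
      e7_F3_def e7_F3t_def e7_F4_def e7_F4t_def e7_G3_def e7_G4_def e7_G4h_def
      F3_def F3t_def F4_def F4t_def G3_def G4_def G4h_def algebra_simps power2_eq_square)

lemma hc_fun_K: "hc_fun e7_K v = 20 * U v ^ 2 + 4 * U v * v - 3 * U v - v"
  by (simp add: hc_fun_def hc_eval_def e7_K_def algebra_simps power2_eq_square)

lemma hc_fun_0: "hc_fun P 0 = of_int (hc_eval P 0 0)"
  using of_int_hc_eval[of P 0 0, where 'a = complex] by (simp add: hc_fun_def U_0)

lemma holomorphic_on_hc_fun [holomorphic_intros]: "S \<subseteq> ball 0 r \<Longrightarrow> hc_fun P holomorphic_on S"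
  unfolding hc_fun_def[abs_def] hc_eval_def
  by (intro holomorphic_intros holomorphic_on_subset[OF holomorphic_U])

lemma isCont_U: "isCont U 0"
  using holomorphic_on_imp_continuous_on[OF holomorphic_U] r_pos
  by (simp add: continuous_on_eq_continuous_at)

lemma isCont_hc_fun: "isCont (hc_fun P) 0"
  unfolding hc_fun_def[abs_def] hc_eval_def by (intro continuous_intros isCont_U)

lemma has_field_derivative_hc_fun:
  assumes "v \<in> ball 0 r" "dcubic v \<noteq> 0"
  shows "(hc_fun P has_field_derivative hc_fun (e7_der P) v / dcubic v) (at v)"
proof -
  have U: "(U has_field_derivative deriv U v) (at v)"
    using holomorphic_U assms(1) by (intro holomorphic_derivI) auto
  have "deriv U v * dcubic v = 2 * v"
    unfolding dcubic_def using on_E7_cubic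
    by (intro param_curve_deriv[of "ball 0 r", OF open_ball assms(1) U]) auto
  then show ?thesis
    unfolding hc_fun_def[abs_def] dcubic_def
    using has_field_derivative_hc_eval[OF U] on_E7_cubic assms by (auto simp: dcubic_def)
qed

lemma isCont_quots:
  "isCont W 0" "isCont K_quot 0" "isCont Phi_quot 0" "isCont vmu_quot 0" "isCont vpu_quot 0"
  "isCont G4h_quot 0" "isCont dcubic 0"
  unfolding W_def[abs_def] K_quot_def[abs_def] Phi_quot_def[abs_def] vmu_quot_def[abs_def]
    vpu_quot_def[abs_def] G4h_quot_def[abs_def] dcubic_def[abs_def] G4_def
  by (auto intro!: continuous_intros isCont_U simp: U_0)

lemma unit_factors_at_0: "\<forall>f\<in>set unit_factors. isCont f 0 \<and> f 0 = 1"
  unfolding unit_factors_def using isCont_quots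
  by (simp add: isCont_hc_fun U_0 W_def vmu_quot_def vpu_quot_def G4h_quot_def
      F3_def F3t_def F4_def F4t_def G3_def G4_def)

lemma good_radius_exists: "\<exists>e. good_radius e"
proof -
  note cont = isCont_quots
  from unit_factors_at_0 have units: "\<forall>f\<in>set unit_factors. eventually (\<lambda>v. f v \<in> ball 1 1) (nhds 0)"
    by (intro ballI isCont_eventually_in_open) auto
  have nz: "eventually (\<lambda>v. f v \<noteq> 0) (nhds 0)" if "isCont f 0" "f 0 \<noteq> 0" for f :: "complex \<Rightarrow> complex"
    using isCont_eventually_in_open[OF that(1), of "-{0}"] that(2) by auto
  have at0: "1 - 11 * U 0 + 32 * U 0 ^ 2 \<noteq> 0" "dcubic 0 \<noteq> 0" "hc_fun Phi_logder_num 0 \<noteq> 0"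
    "K_quot 0 \<noteq> 0" "Phi_quot 0 \<noteq> 0"
    by (simp_all add: U_0 dcubic_def E7_cubic_def hc_fun_def hc_eval_def Phi_logder_num_def
        K_quot_def Phi_quot_def W_def G4_def)
  have cont_den: "isCont (\<lambda>v. 1 - 11 * U v + 32 * U v ^ 2) 0"
    by (intro continuous_intros isCont_U)
  have "eventually (\<lambda>v. 1 - 11 * U v + 32 * U v ^ 2 \<noteq> 0 \<and> dcubic v \<noteq> 0 \<and>
      hc_fun Phi_logder_num v \<noteq> 0 \<and> K_quot v \<noteq> 0 \<and> Phi_quot v \<noteq> 0 \<and>
      (\<forall>f\<in>set unit_factors. f v \<in> ball 1 1)) (nhds 0)"
    using eventually_ball_finite[OF finite_set units] nz[OF cont_den at0(1)] nz[OF cont(7) at0(2)]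
      nz[OF isCont_hc_fun at0(3)] nz[OF cont(2) at0(4)] nz[OF cont(3) at0(5)]
    by eventually_elim auto
  then obtain e where "0 < e" "e \<le> r" "\<forall>v\<in>ball 0 e. 1 - 11 * U v + 32 * U v ^ 2 \<noteq> 0 \<and>
      dcubic v \<noteq> 0 \<and> hc_fun Phi_logder_num v \<noteq> 0 \<and> K_quot v \<noteq> 0 \<and> Phi_quot v \<noteq> 0 \<and>
      (\<forall>f\<in>set unit_factors. f v \<in> ball 1 1)"
    using r_pos by (rule eventually_nhds_imp_ball)
  then have "good_radius e"
    by (auto simp: good_radius_def)
  then show ?thesis ..
qed

context
  fixes e assumes e: "good_radius e"
begin

lemma ball_subset_r: "ball 0 e \<subseteq> ball 0 r"
  using e by (auto simp: good_radius_def)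

lemma good_radiusD:
  assumes "v \<in> ball 0 e"
  shows "v \<in> ball 0 r" "1 - 11 * U v + 32 * U v ^ 2 \<noteq> 0" "dcubic v \<noteq> 0" "hc_fun Phi_logder_num v \<noteq> 0"
    "K_quot v \<noteq> 0" "Phi_quot v \<noteq> 0" "\<And>f. f \<in> set unit_factors \<Longrightarrow> f v \<in> ball 1 1"
  using assms e ball_subset_r by (auto simp: good_radius_def)

lemma unit_factor_nonzero: "v \<in> ball 0 e \<Longrightarrow> f \<in> set unit_factors \<Longrightarrow> f v \<noteq> 0"
  using good_radiusD(7) by fastforce

lemma denominators_nonzero:
  assumes "v \<in> ball 0 e"
  shows "W v \<noteq> 0" "1 - 4 * U v \<noteq> 0" "1 - 8 * U v \<noteq> 0" "G4 (U v) v \<noteq> 0"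
  using unit_factor_nonzero[OF assms, of W] unit_factor_nonzero[OF assms, of "hc_fun e7_1m4u"]
    unit_factor_nonzero[OF assms, of "hc_fun e7_1m8u"] unit_factor_nonzero[OF assms, of "hc_fun e7_G4"]
  by (simp_all add: unit_factors_def)

lemma U_eq: "v \<in> ball 0 e \<Longrightarrow> U v = v\<^sup>2 * W v"
  using on_E7 good_radiusD[of v] by (simp add: W_def field_simps)

lemma holomorphic_W: "W holomorphic_on ball 0 e"
  unfolding W_def[abs_def] using good_radiusD(2)
  by (intro holomorphic_intros holomorphic_on_subset[OF holomorphic_U ball_subset_r]) auto

lemma holomorphic_quots:
  "K_quot holomorphic_on ball 0 e" "Phi_quot holomorphic_on ball 0 e" "vmu_quot holomorphic_on ball 0 e"
  "vpu_quot holomorphic_on ball 0 e" "G4h_quot holomorphic_on ball 0 e"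
  unfolding K_quot_def[abs_def] Phi_quot_def[abs_def] vmu_quot_def[abs_def] vpu_quot_def[abs_def]
    G4h_quot_def[abs_def] G4_def
  using denominators_nonzero
  by (auto simp: G4_def intro!: holomorphic_intros holomorphic_W holomorphic_on_subset[OF holomorphic_U ball_subset_r])

lemma K_eq: "v \<in> ball 0 e \<Longrightarrow> hc_fun e7_K v = v * K_quot v"
  unfolding hc_fun_K U_eq K_quot_def by (simp add: algebra_simps power2_eq_square power3_eq_cube)

lemma Phi_eq: "v \<in> ball 0 e \<Longrightarrow> Phi v = v * Phi_quot v"
proof (cases "v = 0")
  case True
  then show ?thesis
    by (simp add: Phi_def Phi7_def U_0)
next
  case False
  assume v: "v \<in> ball 0 e"
  have K: "20 * U v ^ 2 + 4 * U v * v - 3 * U v - v = v * K_quot v"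
    using K_eq[OF v] by (simp add: hc_fun_K)
  have "Phi v = 128 * (1 - 4 * U v) * (v * K_quot v) ^ 7 / ((v\<^sup>2 * W v) ^ 3 * (1 - 8 * U v) * G4 (U v) v ^ 7)"
    unfolding Phi_def Phi7_def K[symmetric] U_eq[OF v, symmetric] by (simp add: G4_def algebra_simps)
  also have "\<dots> = v * Phi_quot v"
  proof -
    have "a * (v * k) ^ 7 / ((v\<^sup>2 * w) ^ 3 * c * d) = v * (a * k ^ 7 / (w ^ 3 * c * d))" for a k w c d
      using False by (simp add: power_mult_distrib eval_nat_numeral field_simps)
    then show ?thesis
      unfolding Phi_quot_def .
  qed
  finally show ?thesis .
qed

lemma holomorphic_Phi: "Phi holomorphic_on ball 0 e"
proof -
  have "(\<lambda>v. v * Phi_quot v) holomorphic_on ball 0 e"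
    by (intro holomorphic_intros holomorphic_quots)
  then show ?thesis
    by (rule holomorphic_transform) (simp add: Phi_eq)
qed

lemma Phi_0: "Phi 0 = 0"
  by (simp add: Phi_def Phi7_def U_0)

lemma deriv_Phi_0: "deriv Phi 0 \<noteq> 0"
proof -
  have e0: "0 \<in> ball (0::complex) e"
    using e by (simp add: good_radius_def)
  have "(Phi_quot has_field_derivative deriv Phi_quot 0) (at 0)"
    using holomorphic_quots(2) e0 by (intro holomorphic_derivI) auto
  then have "((\<lambda>v. v * Phi_quot v) has_field_derivative Phi_quot 0) (at 0)"
    by (auto intro!: derivative_eq_intros)
  then have "(Phi has_field_derivative Phi_quot 0) (at 0)"
    by (rule has_field_derivative_transform_within_open[of _ _ _ "ball 0 e"]) (use e0 Phi_eq in auto)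
  then show ?thesis
    using good_radiusD(6)[OF e0] by (simp add: DERIV_imp_deriv)
qed

lemma Phi_rational:
  assumes "v \<in> ball 0 e" "v \<noteq> 0"
  shows "hc_fun Phi_den v \<noteq> 0" "Phi v = hc_fun Phi_num v / hc_fun Phi_den v"
proof -
  have "U v \<noteq> 0"
    using assms U_eq denominators_nonzero by simp
  then show "hc_fun Phi_den v \<noteq> 0"
    using assms denominators_nonzero good_radiusD(1) by (simp add: Phi_den_def)
  show "Phi v = hc_fun Phi_num v / hc_fun Phi_den v"
    using good_radiusD(1)[OF assms(1)]
    by (simp add: Phi_def Phi7_def Phi_num_def Phi_den_def hc_fun_K G4_def algebra_simps)
qed

lemma Phi_logder_den_nonzero: "v \<in> ball 0 e \<Longrightarrow> v \<noteq> 0 \<Longrightarrow> hc_fun Phi_logder_den v \<noteq> 0"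
  using good_radiusD[of v] denominators_nonzero[of v] by (simp add: Phi_logder_den_def K_eq G4_def)

lemma has_field_derivative_Phi:
  assumes v: "v \<in> ball 0 e" "v \<noteq> 0"
  defines "Q \<equiv> hc_fun Phi_logder_num" and "Dl \<equiv> hc_fun Phi_logder_den"
  shows "(Phi has_field_derivative Phi v * (Q v / (dcubic v * Dl v))) (at v)"
proof -
  let ?N = "hc_fun Phi_num" and ?D = "hc_fun Phi_den"
  note r = good_radiusD(1,3)[OF v(1)]
  have "((\<lambda>x. ?N x / ?D x) has_field_derivative
      (hc_fun (e7_der Phi_num) v / dcubic v * ?D v - ?N v * (hc_fun (e7_der Phi_den) v / dcubic v))
        / (?D v * ?D v)) (at v)"
    using Phi_rational[OF v] by (intro DERIV_divide has_field_derivative_hc_fun r)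
  then have "(Phi has_field_derivative
      (hc_fun (e7_der Phi_num) v / dcubic v * ?D v - ?N v * (hc_fun (e7_der Phi_den) v / dcubic v))
        / (?D v * ?D v)) (at v)"
    by (rule has_field_derivative_transform_within_open[of _ _ _ "ball 0 e - {0}"])
      (use v Phi_rational in auto)
  moreover have "(hc_fun (e7_der Phi_num) v * ?D v - ?N v * hc_fun (e7_der Phi_den) v) * Dl v = ?N v * ?D v * Q v"
    using hc_eval_eq_if_is_zero[OF Phi_logder_cert, of "U v" v] r
    by (simp add: Q_def Dl_def flip: hc_fun_def)
  moreover have "(dN / C * D - N * (dD / C)) / (D * D) = N / D * (Q' / (C * Dl'))"
    if "(dN * D - N * dD) * Dl' = N * D * Q'" "D \<noteq> 0" "Dl' \<noteq> 0" "C \<noteq> 0" for dN dD N D Dl' Q' C :: complex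
  proof -
    have "(dN / C * D - N * (dD / C)) / (D * D) = (dN * D - N * dD) * Dl' / (C * Dl' * D * D)"
      using that(2-4) by (simp add: field_simps)
    also have "\<dots> = N / D * (Q' / (C * Dl'))"
      using that by (simp add: field_simps)
    finally show ?thesis .
  qed
  ultimately show ?thesis
    using Phi_rational[OF v] Phi_logder_den_nonzero[OF v] r by (simp add: Q_def Dl_def)
qed

lemma factor_logder:
  assumes f: "f holomorphic_on ball 0 e" "\<forall>x\<in>ball 0 e. f x \<noteq> 0 \<and> x ^ k * f x = hc_fun P x"
    and v: "v \<in> ball 0 e" "v \<noteq> 0"
  shows "hc_fun P v \<noteq> 0 \<and> deriv f v / f v = hc_fun (e7_der P) v / (dcubic v * hc_fun P v) - of_nat k / v"
proof -
  have fv: "f v \<noteq> 0" "hc_fun P v = v ^ k * f v"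
    using f(2) v(1) by auto
  have "(f has_field_derivative deriv f v) (at v)"
    using f(1) v(1) by (intro holomorphic_derivI) auto
  then have "((\<lambda>x. x ^ k * f x) has_field_derivative of_nat k * v ^ (k - 1) * f v + v ^ k * deriv f v) (at v)"
    by (auto intro!: derivative_eq_intros)
  then have "(hc_fun P has_field_derivative of_nat k * v ^ (k - 1) * f v + v ^ k * deriv f v) (at v)"
    by (rule has_field_derivative_transform_within_open[of _ _ _ "ball 0 e"]) (use f(2) v in auto)
  then have dP: "of_nat k * v ^ (k - 1) * f v + v ^ k * deriv f v = hc_fun (e7_der P) v / dcubic v"
    using has_field_derivative_hc_fun[OF good_radiusD(1,3)[OF v(1)]] DERIV_unique by blast
  have "deriv f v / f v = hc_fun (e7_der P) v / (dcubic v * hc_fun P v) - of_nat k / v"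
  proof (cases k)
    case 0
    then show ?thesis
      using dP fv good_radiusD(3)[OF v(1)] by (simp add: field_simps)
  next
    case (Suc j)
    then show ?thesis
      using dP fv v(2) good_radiusD(3)[OF v(1)] by (simp add: field_simps)
  qed
  then show ?thesis
    using fv v(2) by simp
qed

lemma sum_factor_logder:
  assumes fs: "\<forall>(n, k, P, f)\<in>set fs. f holomorphic_on ball 0 e \<and>
      (\<forall>x\<in>ball 0 e. f x \<notin> \<real>\<^sub>\<le>\<^sub>0 \<and> x ^ k * f x = hc_fun P x)"
    and v: "v \<in> ball 0 e" "v \<noteq> 0"
  shows "(\<forall>(n, P)\<in>set (factor_polys fs). hc_fun P v \<noteq> 0) \<and>
    (\<Sum>(n, f)\<leftarrow>factor_funs fs. of_int n * (deriv f v / f v))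
      = (\<Sum>(n, P)\<leftarrow>factor_polys fs. of_int n * (hc_fun (e7_der P) v / hc_fun P v)) / dcubic v
        - of_int (\<Sum>(n, k, _)\<leftarrow>fs. n * int k) / v"
  using fs
proof (induction fs)
  case Nil
  then show ?case
    by simp
next
  case (Cons x fs)
  obtain n k P f where x: "x = (n, k, P, f)"
    by (cases x rule: prod_cases4)
  have f: "f holomorphic_on ball 0 e" "\<forall>x\<in>ball 0 e. f x \<noteq> 0 \<and> x ^ k * f x = hc_fun P x"
    using Cons.prems by (auto simp: x)
  have IH: "(\<forall>(n, P)\<in>set (factor_polys fs). hc_fun P v \<noteq> 0) \<and>
    (\<Sum>(n, f)\<leftarrow>factor_funs fs. of_int n * (deriv f v / f v))
      = (\<Sum>(n, P)\<leftarrow>factor_polys fs. of_int n * (hc_fun (e7_der P) v / hc_fun P v)) / dcubic v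
        - of_int (\<Sum>(n, k, _)\<leftarrow>fs. n * int k) / v"
    by (rule Cons.IH) (use Cons.prems in \<open>simp add: x\<close>)
  have step: "of_int n * (A / (C * E) - of_nat k / v) + (Y / C - of_int K / v)
      = (of_int n * (A / E) + Y) / C - of_int (n * int k + K) / v"
    if "C \<noteq> 0" "E \<noteq> 0" for A C E Y :: complex and K :: int
    using that v(2) by (simp add: field_simps)
  note fl = factor_logder[OF f v]
  have "(\<Sum>(n, f)\<leftarrow>factor_funs (x # fs). of_int n * (deriv f v / f v))
      = (\<Sum>(n, P)\<leftarrow>factor_polys (x # fs). of_int n * (hc_fun (e7_der P) v / hc_fun P v)) / dcubic v
        - of_int (\<Sum>(n, k, _)\<leftarrow>x # fs. n * int k) / v"
    unfolding x factor_funs_simps factor_polys_simps list.map sum_list.Cons prod.case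
      conjunct2[OF IH] conjunct2[OF fl]
    by (rule step[OF good_radiusD(3)[OF v(1)] conjunct1[OF fl]])
  with IH fl show ?case
    by (simp add: x)
qed

lemma has_field_derivative_factor_root:
  assumes fs: "valid_factors e fs" and v: "v \<in> ball 0 e" "v \<noteq> 0"
  defines "l \<equiv> logder_num (factor_polys fs)" and "dl \<equiv> logder_den (factor_polys fs)"
  shows "hc_fun dl v \<noteq> 0 \<and> (prod_root 14 (factor_funs fs) has_field_derivative
    prod_root 14 (factor_funs fs) v * (hc_fun l v / (14 * dcubic v * hc_fun dl v))) (at v)"
proof -
  have facs: "\<forall>(n, k, P, f)\<in>set fs. f holomorphic_on ball 0 e \<and>
      (\<forall>x\<in>ball 0 e. f x \<notin> \<real>\<^sub>\<le>\<^sub>0 \<and> x ^ k * f x = hc_fun P x)"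
    and weight: "(\<Sum>(n, k, _)\<leftarrow>fs. n * int k) = 0"
    using fs by (auto simp: valid_factors_def)
  note sum = sum_factor_logder[OF facs v]
  have ld: "hc_fun dl v \<noteq> 0 \<and> hc_fun l v / hc_fun dl v
      = (\<Sum>(n, P)\<leftarrow>factor_polys fs. of_int n * (hc_fun (e7_der P) v / hc_fun P v))"
    using hc_logder_sum_eq[OF on_E7_cubic[OF good_radiusD(1)[OF v(1)]] conjunct1[OF sum[unfolded hc_fun_def]]]
    by (simp add: l_def dl_def logder_num_def logder_den_def hc_fun_def)
  have "\<forall>(n, f)\<in>set (factor_funs fs). f holomorphic_on ball 0 e \<and> (\<forall>x\<in>ball 0 e. f x \<notin> \<real>\<^sub>\<le>\<^sub>0)"
    using facs by (auto simp: factor_funs_def)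
  note deriv = has_field_derivative_prod_root[OF this open_ball v(1), of 14]
  have "(\<Sum>(n, f)\<leftarrow>factor_funs fs. of_int n * (deriv f v / f v)) = hc_fun l v / hc_fun dl v / dcubic v"
    using conjunct2[OF sum] ld weight by simp
  then have "(\<Sum>(n, f)\<leftarrow>factor_funs fs. of_int n * (deriv f v / f v)) / 14
      = hc_fun l v / (14 * dcubic v * hc_fun dl v)"
    by (simp add: field_simps)
  with deriv ld show ?thesis
    by (simp add: ac_simps)
qed

lemma holomorphic_theta_term:
  "H holomorphic_on ball 0 e \<Longrightarrow> k \<noteq> 0 \<Longrightarrow> theta_term H A k m holomorphic_on ball 0 e"
  unfolding theta_term_def[abs_def] using good_radiusD(4)
  by (intro holomorphic_intros ball_subset_r) auto

lemma has_field_derivative_theta_term: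
  assumes H: "(H has_field_derivative H') (at v)" and v: "v \<in> ball 0 e" and k: "k \<noteq> 0"
  defines "Q \<equiv> hc_fun Phi_logder_num"
  shows "(theta_term H A k m has_field_derivative H' * (hc_fun A v / (of_int k * Q v ^ m))
    + (hc_fun (e7_der A) v * Q v - of_nat m * hc_fun A v * hc_fun (e7_der Phi_logder_num) v)
      / (dcubic v * of_int k * Q v ^ (m + 1)) * H v) (at v)"
proof -
  note r = good_radiusD(1,3,4)[OF v]
  have dA: "(hc_fun A has_field_derivative hc_fun (e7_der A) v / dcubic v) (at v)"
    and dQ: "(Q has_field_derivative hc_fun (e7_der Phi_logder_num) v / dcubic v) (at v)"
    unfolding Q_def by (intro has_field_derivative_hc_fun r)+
  let ?dA = "hc_fun (e7_der A) v" and ?dQ = "hc_fun (e7_der Phi_logder_num) v"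
  have "((\<lambda>x. of_int k * Q x ^ m) has_field_derivative of_int k * (of_nat m * Q v ^ (m - 1) * (?dQ / dcubic v))) (at v)"
    by (intro DERIV_cmult DERIV_cong[OF DERIV_power[OF dQ]]) simp
  then have "((\<lambda>x. hc_fun A x / (of_int k * Q x ^ m)) has_field_derivative
      (?dA / dcubic v * (of_int k * Q v ^ m) - hc_fun A v * (of_int k * (of_nat m * Q v ^ (m - 1) * (?dQ / dcubic v))))
        / (of_int k * Q v ^ m * (of_int k * Q v ^ m))) (at v)"
    using k r(3) by (intro DERIV_divide dA) (auto simp: Q_def)
  moreover have "(?dA / dcubic v * (of_int k * Q v ^ m) - hc_fun A v * (of_int k * (of_nat m * Q v ^ (m - 1) * (?dQ / dcubic v))))
        / (of_int k * Q v ^ m * (of_int k * Q v ^ m))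
      = (?dA * Q v - of_nat m * hc_fun A v * ?dQ) / (dcubic v * of_int k * Q v ^ (m + 1))"
    using k r(2,3) by (cases m) (simp_all add: Q_def field_simps)
  ultimately have "((\<lambda>x. hc_fun A x / (of_int k * Q x ^ m)) has_field_derivative
      (?dA * Q v - of_nat m * hc_fun A v * ?dQ) / (dcubic v * of_int k * Q v ^ (m + 1))) (at v)"
    by simp
  from DERIV_mult[OF H this] show ?thesis
    unfolding theta_term_def[abs_def] Q_def .
qed

lemma theta_step:
  assumes H: "\<And>v. v \<in> ball 0 e \<Longrightarrow> v \<noteq> 0 \<Longrightarrow>
      hc_fun dl v \<noteq> 0 \<and> (H has_field_derivative H v * (hc_fun l v / (14 * dcubic v * hc_fun dl v))) (at v)"
    and cert: "theta_cert l dl A k m B k' j" and mj: "m + 2 = m' + j" and k: "k \<noteq> 0" "k' \<noteq> 0"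
    and B0: "hc_fun B 0 = 0" and v: "v \<in> ball 0 e"
  shows "Phi v * deriv (theta_term H A k m) v = deriv Phi v * theta_term H B k' m' v"
proof (cases "v = 0")
  case True
  then show ?thesis
    using B0 by (simp add: Phi_0 theta_term_def)
next
  case False
  let ?Q = "hc_fun Phi_logder_num v" and ?Dl = "hc_fun Phi_logder_den v"
  note r = good_radiusD(1,3,4)[OF v]
  have dl: "hc_fun dl v \<noteq> 0"
    and dH: "(H has_field_derivative H v * (hc_fun l v / (14 * dcubic v * hc_fun dl v))) (at v)"
    using H[OF v False] by auto
  have "of_int k' * (?Dl * (hc_fun l v * hc_fun A v * ?Q + 14 * (hc_fun dl v * (hc_fun (e7_der A) v * ?Q
        - of_nat m * (hc_fun A v * hc_fun (e7_der Phi_logder_num) v)))))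
      = 14 * of_int k * (hc_fun dl v * (hc_fun B v * ?Q ^ j))"
    using hc_eval_eq_if_is_zero[OF cert[unfolded theta_cert_def], of "U v" v] r(1)
    by (simp flip: hc_fun_def)
  from theta_cert_algebra[OF r(2) dl r(3) Phi_logder_den_nonzero[OF v False] _ _ mj this]
  have "deriv (theta_term H A k m) v = ?Q / (dcubic v * ?Dl) * theta_term H B k' m' v"
    using DERIV_imp_deriv[OF has_field_derivative_theta_term[OF dH v k(1), of A m]] k
    by (simp add: theta_term_def)
  then show ?thesis
    using DERIV_imp_deriv[OF has_field_derivative_Phi[OF v False]] by simp
qed

lemma ode_step:
  assumes cert: "ode_cert A1 A2 A3 \<alpha>1 \<alpha>2 \<beta>0 \<beta>1 \<beta>2"
    and coeffs: "of_int \<alpha>2 = 2744 * 7 * (b1 + b2 - 2)" "of_int \<alpha>1 = 2744 * 49 * ((b1 - 1) * (b2 - 1))"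
      "of_int \<beta>2 = 2744 * 7 * (a1 + a2 + a3)" "of_int \<beta>1 = 2744 * 49 * (a1 * a2 + a1 * a3 + a2 * a3)"
      "of_int \<beta>0 = 2744 * 343 * (a1 * a2 * a3)"
    and A0: "hc_fun A1 0 = 0" "hc_fun A2 0 = 0" "hc_fun A3 0 = 0" and v: "v \<in> ball 0 e"
  shows "theta_term H A3 343 5 v + (b1 + b2 - 2) * theta_term H A2 49 3 v
      + (b1 - 1) * (b2 - 1) * theta_term H A1 7 1 v
    = Phi v * (theta_term H A3 343 5 v + (a1 + a2 + a3) * theta_term H A2 49 3 v
      + (a1 * a2 + a1 * a3 + a2 * a3) * theta_term H A1 7 1 v + a1 * a2 * a3 * theta_term H (hc_const 1) 1 0 v)"
proof (cases "v = 0")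
  case True
  then show ?thesis
    using A0 by (simp add: Phi_0 theta_term_def)
next
  case False
  let ?Q = "hc_fun Phi_logder_num v"
  note r = good_radiusD(1,4)[OF v]
  have "hc_fun Phi_den v * (2744 * hc_fun A3 v + of_int \<alpha>2 * (hc_fun A2 v * ?Q ^ 2) + of_int \<alpha>1 * (hc_fun A1 v * ?Q ^ 4))
      = hc_fun Phi_num v * (2744 * hc_fun A3 v + of_int \<beta>2 * (hc_fun A2 v * ?Q ^ 2)
        + of_int \<beta>1 * (hc_fun A1 v * ?Q ^ 4) + of_int \<beta>0 * ?Q ^ 5)"
    using hc_eval_eq_if_is_zero[OF cert[unfolded ode_cert_def], of "U v" v] r(1)
    by (simp add: add.assoc flip: hc_fun_def)
  from ode_cert_algebra[OF Phi_rational(1)[OF v False] r(2) this coeffs, of "H v"] show ?thesis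
    unfolding theta_term_def Phi_rational(2)[OF v False] by simp
qed

lemma factor_root_props:
  assumes "valid_factors e fs"
  shows "prod_root 14 (factor_funs fs) holomorphic_on ball 0 e" "prod_root 14 (factor_funs fs) 0 = 1"
    and "v \<in> ball 0 e \<Longrightarrow> prod_root 14 (factor_funs fs) v ^ 14 = (\<Prod>(n, f)\<leftarrow>factor_funs fs. f v powi n)"
proof -
  have facs: "\<forall>(n, f)\<in>set (factor_funs fs). f 0 = 1 \<and> f holomorphic_on ball 0 e \<and> (\<forall>x\<in>ball 0 e. f x \<notin> \<real>\<^sub>\<le>\<^sub>0)"
    using assms unfolding valid_factors_def factor_funs_def by fastforce
  then show "prod_root 14 (factor_funs fs) holomorphic_on ball 0 e" "prod_root 14 (factor_funs fs) 0 = 1"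
    by (auto intro!: holomorphic_on_prod_root prod_root_eq_1)
  show "prod_root 14 (factor_funs fs) v ^ 14 = (\<Prod>(n, f)\<leftarrow>factor_funs fs. f v powi n)"
    if "v \<in> ball 0 e"
  proof (rule prod_root_power)
    show "\<forall>(n, f)\<in>set (factor_funs fs). f v \<noteq> 0"
    proof
      fix x assume x: "x \<in> set (factor_funs fs)"
      obtain n f where nf: "x = (n, f)"
        by (cases x)
      have "f v \<notin> \<real>\<^sub>\<le>\<^sub>0"
        using bspec[OF facs x] that by (simp add: nf)
      then show "case x of (n, f) \<Rightarrow> f v \<noteq> 0"
        by (auto simp: nf)
    qed
  qed simp
qed

lemma hyp3F2_Phi_eq_factor_root:
  assumes fs: "valid_factors e fs"
    and theta: "theta_certs (logder_num (factor_polys fs)) (logder_den (factor_polys fs)) A1 A2 A3"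
    and ode: "ode_cert A1 A2 A3 \<alpha>1 \<alpha>2 \<beta>0 \<beta>1 \<beta>2"
    and coeffs: "of_int \<alpha>2 = 2744 * 7 * (b1 + b2 - 2)" "of_int \<alpha>1 = 2744 * 49 * ((b1 - 1) * (b2 - 1))"
      "of_int \<beta>2 = 2744 * 7 * (a1 + a2 + a3)" "of_int \<beta>1 = 2744 * 49 * (a1 * a2 + a1 * a3 + a2 * a3)"
      "of_int \<beta>0 = 2744 * 343 * (a1 * a2 * a3)"
    and b: "b1 \<notin> \<int>\<^sub>\<le>\<^sub>0" "b2 \<notin> \<int>\<^sub>\<le>\<^sub>0"
  shows "eventually (\<lambda>v. hyp3F2 a1 a2 a3 b1 b2 (Phi v) = prod_root 14 (factor_funs fs) v) (nhds 0)"
proof -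
  define H where "H = prod_root 14 (factor_funs fs)"
  define l where "l = logder_num (factor_polys fs)"
  define dl where "dl = logder_den (factor_polys fs)"
  have H_hol: "H holomorphic_on ball 0 e" and H_0: "H 0 = 1"
    unfolding H_def using factor_root_props[OF fs] by auto
  have dH: "hc_fun dl v \<noteq> 0 \<and> (H has_field_derivative H v * (hc_fun l v / (14 * dcubic v * hc_fun dl v))) (at v)"
    if "v \<in> ball 0 e" "v \<noteq> 0" for v
    using has_field_derivative_factor_root[OF fs that] unfolding H_def l_def dl_def .
  have certs: "theta_cert l dl (hc_const 1) 1 0 A1 7 1" "theta_cert l dl A1 7 1 A2 49 0"
      "theta_cert l dl A2 49 3 A3 343 0"
    and vanish: "hc_eval A1 (0::int) 0 = 0" "hc_eval A2 (0::int) 0 = 0" "hc_eval A3 (0::int) 0 = 0"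
    using theta by (simp_all add: theta_certs_def l_def dl_def)
  have A_0: "hc_fun A1 0 = 0" "hc_fun A2 0 = 0" "hc_fun A3 0 = 0"
    using vanish by (simp_all add: hc_fun_0)
  have e0: "0 \<in> ball (0::complex) e"
    using e by (simp add: good_radius_def)
  have "eventually (\<lambda>v. hyp3F2 a1 a2 a3 b1 b2 (Phi v) = theta_term H (hc_const 1) 1 0 v) (nhds 0)"
  proof (rule hyp3F2_comp_eqI[of "ball 0 e" Phi "theta_term H (hc_const 1) 1 0" "theta_term H A1 7 1"
        "theta_term H A2 49 3" "theta_term H A3 343 5", OF open_ball e0 holomorphic_Phi Phi_0 deriv_Phi_0
        _ _ _ _ _ _ _ _ _ b])
    show "theta_term H (hc_const 1) 1 0 0 = 1"
      using H_0 by (simp add: theta_term_def)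
    fix v :: complex
    assume v: "v \<in> ball 0 e"
    show "Phi v * deriv (theta_term H (hc_const 1) 1 0) v = deriv Phi v * theta_term H A1 7 1 v"
      by (rule theta_step[OF dH certs(1) _ _ _ A_0(1) v]) auto
    show "Phi v * deriv (theta_term H A1 7 1) v = deriv Phi v * theta_term H A2 49 3 v"
      by (rule theta_step[OF dH certs(2) _ _ _ A_0(2) v]) auto
    show "Phi v * deriv (theta_term H A2 49 3) v = deriv Phi v * theta_term H A3 343 5 v"
      by (rule theta_step[OF dH certs(3) _ _ _ A_0(3) v]) auto
    show "theta_term H A3 343 5 v + (b1 + b2 - 2) * theta_term H A2 49 3 v
        + (b1 - 1) * (b2 - 1) * theta_term H A1 7 1 v
      = Phi v * (theta_term H A3 343 5 v + (a1 + a2 + a3) * theta_term H A2 49 3 v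
        + (a1 * a2 + a1 * a3 + a2 * a3) * theta_term H A1 7 1 v + a1 * a2 * a3 * theta_term H (hc_const 1) 1 0 v)"
      by (rule ode_step[OF ode coeffs A_0 v])
  qed (auto intro: holomorphic_theta_term H_hol)
  then show ?thesis
    by (simp add: theta_term_def H_def)
qed

lemma unit_factor_props:
  assumes "f \<in> set unit_factors"
  shows "f 0 = 1 \<and> f holomorphic_on ball 0 e \<and> (\<forall>v\<in>ball 0 e. f v \<notin> \<real>\<^sub>\<le>\<^sub>0)"
proof -
  have "f holomorphic_on ball 0 e"
    using assms holomorphic_W holomorphic_quots ball_subset_r
    by (auto simp: unit_factors_def intro: holomorphic_on_hc_fun)
  then show ?thesis
    using assms unit_factors_at_0 good_radiusD(7) ball_1_1_notin_nonpos_Reals by blast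
qed

lemma valid_factorsI:
  assumes "(\<Sum>(n, k, _)\<leftarrow>fs. n * int k) = 0"
    and "\<forall>(n, k, P, f)\<in>set fs. f \<in> set unit_factors \<and> (\<forall>v\<in>ball 0 e. v ^ k * f v = hc_fun P v)"
  shows "valid_factors e fs"
  using assms unit_factor_props by (fastforce simp: valid_factors_def)

lemma valid_polynomial_factors:
  assumes "\<forall>(n, P)\<in>set l. hc_fun P \<in> set unit_factors"
  shows "valid_factors e (polynomial_factors l)"
proof (rule valid_factorsI)
  show "(\<Sum>(n, k, _)\<leftarrow>polynomial_factors l. n * int k) = 0"
    by (induction l) (auto simp: polynomial_factors_def)
qed (use assms in \<open>auto simp: polynomial_factors_def\<close>)

lemma valid_h3_factor_list: "valid_factors e h3_factor_list"
proof (rule valid_factorsI)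
  have "x * G4h_quot x = hc_fun e7_G4h x" "x\<^sup>2 * W x = hc_fun e7_u x" "x * vmu_quot x = hc_fun e7_vmu x"
    "x * vpu_quot x = hc_fun e7_vpu x" if "x \<in> ball 0 e" for x
    using U_eq[OF that] by (simp_all add: G4h_quot_def vmu_quot_def vpu_quot_def G4h_def
        algebra_simps power2_eq_square power3_eq_cube)
  then show "\<forall>(n, k, P, f)\<in>set h3_factor_list. f \<in> set unit_factors \<and> (\<forall>v\<in>ball 0 e. v ^ k * f v = hc_fun P v)"
    by (simp add: h3_factor_list_def unit_factors_def)
qed (simp add: h3_factor_list_def)

lemma valid_h1: "valid_factors e (polynomial_factors h1_factors)"
  by (rule valid_polynomial_factors) (simp add: h1_factors_def unit_factors_def)

lemma valid_h2: "valid_factors e (polynomial_factors h2_factors)"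
  by (rule valid_polynomial_factors) (simp add: h2_factors_def unit_factors_def)

lemma rhs_holomorphic: "rhs1 holomorphic_on ball 0 e" "rhs2 holomorphic_on ball 0 e" "rhs3 holomorphic_on ball 0 e"
  and rhs_0: "rhs1 0 = 1" "rhs2 0 = 1" "rhs3 0 = 1"
  unfolding rhs1_def rhs2_def rhs3_def
  using factor_root_props[OF valid_h1] factor_root_props[OF valid_h2] factor_root_props[OF valid_h3_factor_list]
  by simp_all

lemma rhs1_hyp3F2: "eventually (\<lambda>v. hyp3F2 (-1/14) (1/14) (5/14) (1/7) (5/7) (Phi v) = rhs1 v) (nhds 0)"
  unfolding rhs1_def
  by (rule hyp3F2_Phi_eq_factor_root[OF valid_h1 _ h1_ode_cert])
    (simp_all add: h1_theta_certs pos_Re_notin_nonpos_Ints)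

lemma rhs2_hyp3F2: "eventually (\<lambda>v. hyp3F2 (3/14) (5/14) (9/14) (3/7) (9/7) (Phi v) = rhs2 v) (nhds 0)"
  unfolding rhs2_def
  by (rule hyp3F2_Phi_eq_factor_root[OF valid_h2 _ h2_ode_cert])
    (simp_all add: h2_theta_certs pos_Re_notin_nonpos_Ints)

lemma rhs3_hyp3F2: "eventually (\<lambda>v. hyp3F2 (11/14) (13/14) (17/14) (11/7) (13/7) (Phi v) = rhs3 v) (nhds 0)"
proof -
  have polys: "factor_polys h3_factor_list = h3_factors"
    by (simp add: h3_factor_list_def h3_factors_def)
  show ?thesis
    unfolding rhs3_def
    by (rule hyp3F2_Phi_eq_factor_root[OF valid_h3_factor_list _ h3_ode_cert])
      (simp_all add: polys h3_theta_certs pos_Re_notin_nonpos_Ints)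
qed

lemma rhs1_power:
  assumes "v \<in> ball 0 e"
  shows "rhs1 v ^ 14 * G4 (U v) v ^ 7 = F3 (U v) v * F4 (U v) v ^ 2 * F4t (U v) v ^ 6"
proof -
  have "G4 (U v) v \<noteq> 0"
    using denominators_nonzero[OF assms] by simp
  moreover have "rhs1 v ^ 14 = F3 (U v) v * F4 (U v) v ^ 2 * F4t (U v) v ^ 6 / G4 (U v) v ^ 7"
    using factor_root_props(3)[OF valid_h1 assms] by (simp add: rhs1_def h1_factors_def power_int_minus field_simps)
  ultimately show ?thesis
    by (simp add: field_simps)
qed

lemma rhs2_power:
  assumes "v \<in> ball 0 e"
  shows "rhs2 v ^ 14 * F3t (U v) v ^ 8 * G3 (U v) v ^ 28
    = (1 - 4 * U v) ^ 8 * F3 (U v) v * F4t (U v) v ^ 8 * G4 (U v) v ^ 21"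
proof -
  have "F3t (U v) v \<noteq> 0" "G3 (U v) v \<noteq> 0"
    using unit_factor_nonzero[OF assms, of "hc_fun e7_F3t"] unit_factor_nonzero[OF assms, of "hc_fun e7_G3"]
    by (simp_all add: unit_factors_def)
  moreover have "rhs2 v ^ 14 = (1 - 4 * U v) ^ 8 * F3 (U v) v * F4t (U v) v ^ 8 * G4 (U v) v ^ 21
      / (F3t (U v) v ^ 8 * G3 (U v) v ^ 28)"
    using factor_root_props(3)[OF valid_h2 assms] by (simp add: rhs2_def h2_factors_def power_int_minus field_simps)
  ultimately show ?thesis
    by (simp add: field_simps)
qed

lemma rhs3_power:
  assumes v: "v \<in> ball 0 e"
  shows "rhs3 v ^ 14 * (U v ^ 32 * (v - U v) * (v + U v) ^ 12 * G3 (U v) v ^ 84)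
    = (1 - 8 * U v) ^ 14 * F3t (U v) v ^ 5 * G4h (U v) v ^ 77"
proof -
  have nz: "G3 (U v) v \<noteq> 0" "W v \<noteq> 0" "vmu_quot v \<noteq> 0" "vpu_quot v \<noteq> 0"
    using unit_factor_nonzero[OF v, of "hc_fun e7_G3"] unit_factor_nonzero[OF v, of W]
      unit_factor_nonzero[OF v, of vmu_quot] unit_factor_nonzero[OF v, of vpu_quot]
    by (simp_all add: unit_factors_def)
  have rhs: "rhs3 v ^ 14 = (1 - 8 * U v) ^ 14 * F3t (U v) v ^ 5 * G4h_quot v ^ 77
      / (W v ^ 32 * vmu_quot v * vpu_quot v ^ 12 * G3 (U v) v ^ 84)"
    using factor_root_props(3)[OF valid_h3_factor_list v]
    by (simp add: rhs3_def h3_factor_list_def power_int_minus field_simps)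
  have u: "U v = v\<^sup>2 * W v"
    by (rule U_eq[OF v])
  have lhs: "U v ^ 32 * (v - U v) * (v + U v) ^ 12 = v ^ 77 * (W v ^ 32 * vmu_quot v * vpu_quot v ^ 12)"
  proof -
    have "v - U v = v * vmu_quot v" "v + U v = v * vpu_quot v"
      unfolding vmu_quot_def vpu_quot_def u by (simp_all add: algebra_simps power2_eq_square)
    moreover have "U v ^ 32 = v ^ 64 * W v ^ 32"
      unfolding u by (simp add: power_mult_distrib flip: power_mult)
    ultimately show ?thesis
      by (simp only:) (simp add: power_mult_distrib mult_ac flip: power_Suc power_add)
  qed
  have "G4h (U v) v = v * G4h_quot v"
    unfolding G4h_def G4h_quot_def u by (simp add: algebra_simps power2_eq_square power3_eq_cube)
  then show ?thesis
    unfolding lhs rhs using nz by (simp add: field_simps power_mult_distrib)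
qed

end

end

theorem mainTheorem13:
  fixes U :: "complex \<Rightarrow> complex" and r :: real
  assumes "r > 0"
    and "U holomorphic_on ball 0 r"
    and "U 0 = 0"
    and "\<forall>v\<in>ball 0 r. v^2 = U v * (1 - 11 * U v + 32 * (U v)^2)"
  shows "\<exists>\<rho>>0. \<rho> \<le> r \<and>
    (\<exists>h1 h2 h3.
       h1 holomorphic_on ball 0 \<rho> \<and> h2 holomorphic_on ball 0 \<rho> \<and> h3 holomorphic_on ball 0 \<rho> \<and>
       h1 0 = 1 \<and> h2 0 = 1 \<and> h3 0 = 1 \<and>
       (\<forall>v\<in>ball 0 \<rho>. let u = U v in
          h1 v ^ 14 * G4 u v ^ 7 = F3 u v * F4 u v ^ 2 * F4t u v ^ 6 \<and>
          h2 v ^ 14 * F3t u v ^ 8 * G3 u v ^ 28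
            = (1 - 4*u) ^ 8 * F3 u v * F4t u v ^ 8 * G4 u v ^ 21 \<and>
          h3 v ^ 14 * (u ^ 32 * (v - u) * (v + u) ^ 12 * G3 u v ^ 84)
            = (1 - 8*u) ^ 14 * F3t u v ^ 5 * G4h u v ^ 77 \<and>
          hyp3F2 (-1/14) (1/14) (5/14) (1/7) (5/7) (Phi7 u v) = h1 v \<and>
          hyp3F2 (3/14) (5/14) (9/14) (3/7) (9/7) (Phi7 u v) = h2 v \<and>
          hyp3F2 (11/14) (13/14) (17/14) (11/7) (13/7) (Phi7 u v) = h3 v))"
proof -
  interpret E7_branch U r
    using assms by unfold_locales
  obtain e where e: "good_radius e"
    using good_radius_exists by blast
  then have "0 < e" "e \<le> r"
    by (simp_all add: good_radius_def)
  have "eventually (\<lambda>v. hyp3F2 (-1/14) (1/14) (5/14) (1/7) (5/7) (Phi v) = rhs1 v \<and>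
      hyp3F2 (3/14) (5/14) (9/14) (3/7) (9/7) (Phi v) = rhs2 v \<and>
      hyp3F2 (11/14) (13/14) (17/14) (11/7) (13/7) (Phi v) = rhs3 v) (nhds 0)"
    using rhs1_hyp3F2[OF e] rhs2_hyp3F2[OF e] rhs3_hyp3F2[OF e] by eventually_elim blast
  then obtain \<rho> where \<rho>: "0 < \<rho>" "\<rho> \<le> e" and hyp: "\<forall>v\<in>ball 0 \<rho>.
      hyp3F2 (-1/14) (1/14) (5/14) (1/7) (5/7) (Phi v) = rhs1 v \<and>
      hyp3F2 (3/14) (5/14) (9/14) (3/7) (9/7) (Phi v) = rhs2 v \<and>
      hyp3F2 (11/14) (13/14) (17/14) (11/7) (13/7) (Phi v) = rhs3 v"
    using \<open>0 < e\<close> by (rule eventually_nhds_imp_ball)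
  have sub: "ball 0 \<rho> \<subseteq> ball 0 e"
    using \<rho>(2) by auto
  show ?thesis
    using \<rho> \<open>e \<le> r\<close> hyp rhs_0[OF e] rhs_holomorphic[OF e, THEN holomorphic_on_subset, OF sub]
      rhs1_power[OF e] rhs2_power[OF e] rhs3_power[OF e] subsetD[OF sub]
    by (intro exI[of _ \<rho>] exI[of _ rhs1] exI[of _ rhs2] exI[of _ rhs3] conjI) (auto simp: Let_def Phi_def)
qed

end
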